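(* Let $m\geq 1$. Let $\mathcal{I}\subseteq\mathcal{H}(C_m(\mathcal{P}))$ be the subspace spanned by the classes $[M_\circ]$ of $m$-cyclic complexes $M_\circ=(M_i,d_i)_{i\in\mathbb{Z}_m}\in C_m(\mathcal{P})$ with $d_0\neq 0$. Then $\mathcal{I}$ is a two-sided ideal of the algebra $\mathcal{H}(C_m(\mathcal{P}))$.
   Context: Let $k=\mathbb{F}_q$ be a finite field and $\mathcal{A}$ an essentially small finitary abelian $k$-category (all Hom and $\mathrm{Ext}^1$ spaces finite) with enough projectives; $\mathcal{P}\subset\mathcal{A}$ is the full subcategory of projective objects. For $m\geq1$, $\mathbb{Z}_m=\mathbb{Z}/m\mathbb{Z}=\{0,1,\dots,m-1\}$. An $m$-cyclic complex $M_\circ=(M_i,d_i)_{i\in\mathbb{Z}_m}$ over $\mathcal{A}$ consists of objects $M_i$ and morphisms $d_i:M_i\to M_{i+1}$ with $d_{i+1}d_i=0$ for all $i\in\mathbb{Z}_m$; morphisms are families $f_i:M_i\to N_i$ commuting with the differentials. This gives an abelian category $C_m(\mathcal{A})$, and $C_m(\mathcal{P})$ is the full subcategory of $m$-cyclic complexes with all $M_i\in\mathcal{P}$; it is closed under extensions (componentwise exact sequences). For a finitary abelian category $\mathcal{B}$, the Hall algebra $\mathcal{H}(\mathcal{B})$ is the $\mathbb{C}$-vector space with basis the isomorphism classes $[M]$ of objects of $\mathcal{B}$ and multiplication $[M]\diamond[N]=\sum_{[L]}\frac{|\mathrm{Ext}^1_{\mathcal{B}}(M,N)_L|}{|\mathrm{Hom}_{\mathcal{B}}(M,N)|}[L]$,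 where $\mathrm{Ext}^1_{\mathcal{B}}(M,N)_L$ is the set of classes of extensions $0\to N\to L\to M\to0$ with middle term isomorphic to $L$. $\mathcal{H}(C_m(\mathcal{P}))$ denotes the subalgebra of $\mathcal{H}(C_m(\mathcal{A}))$ spanned by classes of objects of $C_m(\mathcal{P})$. *)

theory Defs
  imports Complex_Main
begin

text \<open>A (small) category whose Hom sets carry a k-vector space structure.
  cmp g f is the composite of f followed by g.\<close>

record ('o, 'a, 'k) kcat =
  Ob   :: "'o set"
  Hom  :: "'o \<Rightarrow> 'o \<Rightarrow> 'a set"
  cmp  :: "'a \<Rightarrow> 'a \<Rightarrow> 'a"
  idt  :: "'o \<Rightarrow> 'a"
  zer  :: "'o \<Rightarrow> 'o \<Rightarrow> 'a"
  add  :: "'a \<Rightarrow> 'a \<Rightarrow> 'a"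
  neg  :: "'a \<Rightarrow> 'a"
  smul :: "'k \<Rightarrow> 'a \<Rightarrow> 'a"

definition is_category :: "('o, 'a, 'k) kcat \<Rightarrow> bool" where
  "is_category C \<longleftrightarrow>
     (\<forall>X\<in>Ob C. idt C X \<in> Hom C X X) \<and>
     (\<forall>X\<in>Ob C. \<forall>Y\<in>Ob C. \<forall>Z\<in>Ob C. \<forall>f\<in>Hom C X Y. \<forall>g\<in>Hom C Y Z.
        cmp C g f \<in> Hom C X Z) \<and>
     (\<forall>W\<in>Ob C. \<forall>X\<in>Ob C. \<forall>Y\<in>Ob C. \<forall>Z\<in>Ob C.
        \<forall>f\<in>Hom C W X. \<forall>g\<in>Hom C X Y. \<forall>h\<in>Hom C Y Z.
        cmp C h (cmp C g f) = cmp C (cmp C h g) f) \<and>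
     (\<forall>X\<in>Ob C. \<forall>Y\<in>Ob C. \<forall>f\<in>Hom C X Y.
        cmp C f (idt C X) = f \<and> cmp C (idt C Y) f = f)"

definition is_klinear :: "('o, 'a, 'k::field) kcat \<Rightarrow> bool" where
  "is_klinear C \<longleftrightarrow>
     (\<forall>X\<in>Ob C. \<forall>Y\<in>Ob C.
        zer C X Y \<in> Hom C X Y \<and>
        (\<forall>f\<in>Hom C X Y. \<forall>g\<in>Hom C X Y. add C f g \<in> Hom C X Y) \<and>
        (\<forall>f\<in>Hom C X Y. neg C f \<in> Hom C X Y) \<and>
        (\<forall>a. \<forall>f\<in>Hom C X Y. smul C a f \<in> Hom C X Y) \<and>
        (\<forall>f\<in>Hom C X Y. \<forall>g\<in>Hom C X Y. \<forall>h\<in>Hom C X Y.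
            add C (add C f g) h = add C f (add C g h)) \<and>
        (\<forall>f\<in>Hom C X Y. \<forall>g\<in>Hom C X Y. add C f g = add C g f) \<and>
        (\<forall>f\<in>Hom C X Y. add C f (zer C X Y) = f) \<and>
        (\<forall>f\<in>Hom C X Y. add C f (neg C f) = zer C X Y) \<and>
        (\<forall>a b. \<forall>f\<in>Hom C X Y. smul C (a + b) f = add C (smul C a f) (smul C b f)) \<and>
        (\<forall>a. \<forall>f\<in>Hom C X Y. \<forall>g\<in>Hom C X Y.
            smul C a (add C f g) = add C (smul C a f) (smul C a g)) \<and>
        (\<forall>a b. \<forall>f\<in>Hom C X Y. smul C (a * b) f = smul C a (smul C b f)) \<and>
        (\<forall>f\<in>Hom C X Y. smul C 1 f = f)) \<and>
     (\<forall>X\<in>Ob C. \<forall>Y\<in>Ob C. \<forall>Z\<in>Ob C.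
        \<forall>f\<in>Hom C X Y. \<forall>f'\<in>Hom C X Y. \<forall>g\<in>Hom C Y Z. \<forall>g'\<in>Hom C Y Z. \<forall>a.
          cmp C (add C g g') f = add C (cmp C g f) (cmp C g' f) \<and>
          cmp C g (add C f f') = add C (cmp C g f) (cmp C g f') \<and>
          cmp C (smul C a g) f = smul C a (cmp C g f) \<and>
          cmp C g (smul C a f) = smul C a (cmp C g f))"

definition is_mono :: "('o, 'a, 'k) kcat \<Rightarrow> 'o \<Rightarrow> 'o \<Rightarrow> 'a \<Rightarrow> bool" where
  "is_mono C X Y f \<longleftrightarrow> f \<in> Hom C X Y \<and>
     (\<forall>Z\<in>Ob C. \<forall>g\<in>Hom C Z X. \<forall>h\<in>Hom C Z X. cmp C f g = cmp C f h \<longrightarrow> g = h)"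

definition is_epi :: "('o, 'a, 'k) kcat \<Rightarrow> 'o \<Rightarrow> 'o \<Rightarrow> 'a \<Rightarrow> bool" where
  "is_epi C X Y f \<longleftrightarrow> f \<in> Hom C X Y \<and>
     (\<forall>Z\<in>Ob C. \<forall>g\<in>Hom C Y Z. \<forall>h\<in>Hom C Y Z. cmp C g f = cmp C h f \<longrightarrow> g = h)"

definition isomorphic :: "('o, 'a, 'k) kcat \<Rightarrow> 'o \<Rightarrow> 'o \<Rightarrow> bool" where
  "isomorphic C X Y \<longleftrightarrow> X \<in> Ob C \<and> Y \<in> Ob C \<and>
     (\<exists>f\<in>Hom C X Y. \<exists>g\<in>Hom C Y X. cmp C g f = idt C X \<and> cmp C f g = idt C Y)"

definition is_zero_object :: "('o, 'a, 'k) kcat \<Rightarrow> 'o \<Rightarrow> bool" where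
  "is_zero_object C Z \<longleftrightarrow> Z \<in> Ob C \<and>
     (\<forall>X\<in>Ob C. (\<exists>!f. f \<in> Hom C Z X) \<and> (\<exists>!f. f \<in> Hom C X Z))"

definition is_kernel :: "('o, 'a, 'k) kcat \<Rightarrow> 'o \<Rightarrow> 'o \<Rightarrow> 'a \<Rightarrow> 'o \<Rightarrow> 'a \<Rightarrow> bool" where
  "is_kernel C X Y f K k \<longleftrightarrow> K \<in> Ob C \<and> k \<in> Hom C K X \<and> cmp C f k = zer C K Y \<and>
     (\<forall>W\<in>Ob C. \<forall>g\<in>Hom C W X. cmp C f g = zer C W Y \<longrightarrow>
        (\<exists>!u. u \<in> Hom C W K \<and> cmp C k u = g))"

definition is_cokernel :: "('o, 'a, 'k) kcat \<Rightarrow> 'o \<Rightarrow> 'o \<Rightarrow> 'a \<Rightarrow> 'o \<Rightarrow> 'a \<Rightarrow> bool" where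
  "is_cokernel C X Y f Q c \<longleftrightarrow> Q \<in> Ob C \<and> c \<in> Hom C Y Q \<and> cmp C c f = zer C X Q \<and>
     (\<forall>W\<in>Ob C. \<forall>g\<in>Hom C Y W. cmp C g f = zer C X W \<longrightarrow>
        (\<exists>!u. u \<in> Hom C Q W \<and> cmp C u c = g))"

definition is_biproduct :: "('o, 'a, 'k) kcat \<Rightarrow> 'o \<Rightarrow> 'o \<Rightarrow> 'o \<Rightarrow> bool" where
  "is_biproduct C X Y S \<longleftrightarrow> S \<in> Ob C \<and>
     (\<exists>i1\<in>Hom C X S. \<exists>i2\<in>Hom C Y S. \<exists>p1\<in>Hom C S X. \<exists>p2\<in>Hom C S Y.
        cmp C p1 i1 = idt C X \<and> cmp C p2 i2 = idt C Y \<and>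
        cmp C p1 i2 = zer C Y X \<and> cmp C p2 i1 = zer C X Y \<and>
        add C (cmp C i1 p1) (cmp C i2 p2) = idt C S)"

definition is_abelian :: "('o, 'a, 'k::field) kcat \<Rightarrow> bool" where
  "is_abelian C \<longleftrightarrow> is_category C \<and> is_klinear C \<and>
     (\<exists>Z. is_zero_object C Z) \<and>
     (\<forall>X\<in>Ob C. \<forall>Y\<in>Ob C. \<exists>S. is_biproduct C X Y S) \<and>
     (\<forall>X\<in>Ob C. \<forall>Y\<in>Ob C. \<forall>f\<in>Hom C X Y.
        (\<exists>K k. is_kernel C X Y f K k) \<and> (\<exists>Q c. is_cokernel C X Y f Q c)) \<and>
     (\<forall>X\<in>Ob C. \<forall>Y\<in>Ob C. \<forall>f.
        is_mono C X Y f \<longrightarrow> (\<exists>Z\<in>Ob C. \<exists>g\<in>Hom C Y Z. is_kernel C Y Z g X f)) \<and>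
     (\<forall>X\<in>Ob C. \<forall>Y\<in>Ob C. \<forall>f.
        is_epi C X Y f \<longrightarrow> (\<exists>Z\<in>Ob C. \<exists>g\<in>Hom C Z X. is_cokernel C Z X g Y f))"

definition is_ses :: "('o, 'a, 'k) kcat \<Rightarrow> 'o \<Rightarrow> 'o \<Rightarrow> 'o \<Rightarrow> 'a \<Rightarrow> 'a \<Rightarrow> bool" where
  "is_ses C N L M i p \<longleftrightarrow> N \<in> Ob C \<and> L \<in> Ob C \<and> M \<in> Ob C \<and>
     is_mono C N L i \<and> is_epi C L M p \<and> is_kernel C L M p N i"

definition exts :: "('o, 'a, 'k) kcat \<Rightarrow> 'o \<Rightarrow> 'o \<Rightarrow> ('o \<times> 'a \<times> 'a) set" where
  "exts C M N = {(L, i, p). is_ses C N L M i p}"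

definition ext_rel :: "('o, 'a, 'k) kcat \<Rightarrow> 'o \<Rightarrow> 'o \<Rightarrow> (('o \<times> 'a \<times> 'a) \<times> ('o \<times> 'a \<times> 'a)) set" where
  "ext_rel C M N = {((L, i, p), (L', i', p')).
      (L, i, p) \<in> exts C M N \<and> (L', i', p') \<in> exts C M N \<and>
      (\<exists>\<phi>\<in>Hom C L L'. cmp C \<phi> i = i' \<and> cmp C p' \<phi> = p)}"

definition Ext1 :: "('o, 'a, 'k) kcat \<Rightarrow> 'o \<Rightarrow> 'o \<Rightarrow> ('o \<times> 'a \<times> 'a) set set" where
  "Ext1 C M N = exts C M N // ext_rel C M N"

definition Ext1_mid :: "('o, 'a, 'k) kcat \<Rightarrow> 'o \<Rightarrow> 'o \<Rightarrow> 'o \<Rightarrow> ('o \<times> 'a \<times> 'a) set set" where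
  "Ext1_mid C M N L = {c \<in> Ext1 C M N. \<exists>(L', i, p)\<in>c. isomorphic C L' L}"

definition is_projective :: "('o, 'a, 'k) kcat \<Rightarrow> 'o \<Rightarrow> bool" where
  "is_projective C P \<longleftrightarrow> P \<in> Ob C \<and>
     (\<forall>X\<in>Ob C. \<forall>Y\<in>Ob C. \<forall>e f. is_epi C X Y e \<longrightarrow> f \<in> Hom C P Y \<longrightarrow>
        (\<exists>g\<in>Hom C P X. cmp C e g = f))"

definition enough_projectives :: "('o, 'a, 'k) kcat \<Rightarrow> bool" where
  "enough_projectives C \<longleftrightarrow>
     (\<forall>X\<in>Ob C. \<exists>P e. is_projective C P \<and> is_epi C P X e)"

definition finitary_abelian :: "('o, 'a, 'k::{finite,field}) kcat \<Rightarrow> bool" where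
  "finitary_abelian C \<longleftrightarrow> is_abelian C \<and>
     (\<forall>X\<in>Ob C. \<forall>Y\<in>Ob C. finite (Hom C X Y) \<and> finite (Ext1 C X Y))"

text \<open>An m-cyclic complex is a pair (M, d) of families indexed by i < m
  (values at i \<ge> m are fixed to undefined); indices are taken mod m.\<close>

definition cyc_cat :: "('o, 'a, 'k) kcat \<Rightarrow> nat \<Rightarrow>
    ((nat \<Rightarrow> 'o) \<times> (nat \<Rightarrow> 'a), nat \<Rightarrow> 'a, 'k) kcat" where
  "cyc_cat C m = \<lparr>
     Ob = {(M, d). (\<forall>i<m. M i \<in> Ob C \<and> d i \<in> Hom C (M i) (M (Suc i mod m)) \<and>
                       cmp C (d (Suc i mod m)) (d i) = zer C (M i) (M (Suc (Suc i mod m) mod m))) \<and>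
                   (\<forall>i\<ge>m. M i = undefined \<and> d i = undefined)},
     Hom = (\<lambda>(M, d) (N, e). {f. (\<forall>i<m. f i \<in> Hom C (M i) (N i) \<and>
                                       cmp C (e i) (f i) = cmp C (f (Suc i mod m)) (d i)) \<and>
                                 (\<forall>i\<ge>m. f i = undefined)}),
     cmp = (\<lambda>g f i. if i < m then cmp C (g i) (f i) else undefined),
     idt = (\<lambda>X i. if i < m then idt C (fst X i) else undefined),
     zer = (\<lambda>X Y i. if i < m then zer C (fst X i) (fst Y i) else undefined),
     add = (\<lambda>f g i. if i < m then add C (f i) (g i) else undefined),
     neg = (\<lambda>f i. if i < m then neg C (f i) else undefined),
     smul = (\<lambda>a f i. if i < m then smul C a (f i) else undefined) \<rparr>"

definition in_CmP :: "('o, 'a, 'k) kcat \<Rightarrow> nat \<Rightarrow> (nat \<Rightarrow> 'o) \<times> (nat \<Rightarrow> 'a) \<Rightarrow> bool" where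
  "in_CmP C m X \<longleftrightarrow> X \<in> Ob (cyc_cat C m) \<and> (\<forall>i<m. is_projective C (fst X i))"

definition d0_nonzero :: "('o, 'a, 'k) kcat \<Rightarrow> nat \<Rightarrow> (nat \<Rightarrow> 'o) \<times> (nat \<Rightarrow> 'a) \<Rightarrow> bool" where
  "d0_nonzero C m X \<longleftrightarrow> snd X 0 \<noteq> zer C (fst X 0) (fst X (1 mod m))"

definition isocls :: "('o, 'a, 'k) kcat \<Rightarrow> 'o \<Rightarrow> 'o set" where
  "isocls C X = {Y. isomorphic C X Y}"

definition iso_classes :: "('o, 'a, 'k) kcat \<Rightarrow> ('o \<Rightarrow> bool) \<Rightarrow> 'o set set" where
  "iso_classes C S = {isocls C X | X. X \<in> Ob C \<and> S X}"

definition rep :: "'o set \<Rightarrow> 'o" where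
  "rep c = (SOME X. X \<in> c)"

text \<open>Elements of the Hall algebra are finitely supported complex-valued functions on
  isomorphism classes; the class [M] is the indicator of isocls M.\<close>
definition hall_span :: "('o, 'a, 'k) kcat \<Rightarrow> ('o \<Rightarrow> bool) \<Rightarrow> ('o set \<Rightarrow> complex) set" where
  "hall_span C S = {f. finite {c. f c \<noteq> 0} \<and> {c. f c \<noteq> 0} \<subseteq> iso_classes C S}"

definition hall_coeff :: "('o, 'a, 'k) kcat \<Rightarrow> 'o \<Rightarrow> 'o \<Rightarrow> 'o \<Rightarrow> complex" where
  "hall_coeff C M N L = of_nat (card (Ext1_mid C M N L)) / of_nat (card (Hom C M N))"

definition hall_mult :: "('o, 'a, 'k) kcat \<Rightarrow> ('o set \<Rightarrow> complex) \<Rightarrow> ('o set \<Rightarrow> complex) \<Rightarrow> ('o set \<Rightarrow> complex)" where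
  "hall_mult C f g = (\<lambda>c. if c \<in> iso_classes C (\<lambda>_. True) then
      (\<Sum>a\<in>{a. f a \<noteq> 0}. \<Sum>b\<in>{b. g b \<noteq> 0}. f a * g b * hall_coeff C (rep a) (rep b) (rep c))
    else 0)"

definition two_sided_ideal :: "(('c \<Rightarrow> complex) \<Rightarrow> ('c \<Rightarrow> complex) \<Rightarrow> ('c \<Rightarrow> complex)) \<Rightarrow>
    ('c \<Rightarrow> complex) set \<Rightarrow> ('c \<Rightarrow> complex) set \<Rightarrow> bool" where
  "two_sided_ideal mult R J \<longleftrightarrow> J \<subseteq> R \<and> (\<lambda>_. 0) \<in> J \<and>
     (\<forall>f\<in>J. \<forall>g\<in>J. (\<lambda>c. f c + g c) \<in> J) \<and>
     (\<forall>a. \<forall>f\<in>J. (\<lambda>c. a * f c) \<in> J) \<and>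
     (\<forall>f\<in>R. \<forall>g\<in>J. mult f g \<in> J \<and> mult g f \<in> J)"

end

theory Submission
  imports Defs "HOL-Library.FuncSet"
begin

(* Objects of C_m(P) have projective components, so a short exact sequence
   0 -> N -> L -> M -> 0 of m-cyclic complexes with M, N in C_m(P) splits in every degree:
   each L_i is a biproduct of N_i and M_i, hence projective, and L lies in C_m(P) again.
   Monomorphisms, epimorphisms and kernels of C_m(A) are detected degreewise by testing
   against disk complexes, which represent evaluation at a degree.  From
   d_0^L i_0 = i_1 d_0^N with i_1 mono and p_1 d_0^L = d_0^M p_0 with p_0 epi, d_0^L = 0
   forces d_0^N = 0 and d_0^M = 0.  So every [L] occurring in [M] * [N] has d_0 nonzero as
   soon as M or N has.  The support of such a product is finite because L is isomorphic to
   a complex on the fixed components N_i + M_i, which carry only finitely many differentials. *)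

section \<open>Spans of classes in the Hall algebra\<close>

lemma hall_span_mono: "(\<And>X. T X \<Longrightarrow> S X) \<Longrightarrow> hall_span C T \<subseteq> hall_span C S"
  unfolding hall_span_def iso_classes_def by blast

lemma zero_in_hall_span: "(\<lambda>_. 0) \<in> hall_span C S"
  unfolding hall_span_def by simp

lemma hall_span_add:
  assumes "f \<in> hall_span C S" and "g \<in> hall_span C S"
  shows "(\<lambda>c. f c + g c) \<in> hall_span C S"
proof -
  have "{c. f c + g c \<noteq> 0} \<subseteq> {c. f c \<noteq> 0} \<union> {c. g c \<noteq> 0}" by auto
  with assms show ?thesis unfolding hall_span_def by (auto intro: finite_subset)
qed

lemma hall_span_scale:
  assumes "f \<in> hall_span C S"
  shows "(\<lambda>c. a * f c) \<in> hall_span C S"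
proof -
  have "{c. a * f c \<noteq> 0} \<subseteq> {c. f c \<noteq> 0}" by auto
  with assms show ?thesis unfolding hall_span_def by (auto intro: finite_subset)
qed

lemma hall_coeff_nonzero:
  assumes "hall_coeff C M N L \<noteq> 0"
  obtains L' i p where "(L', i, p) \<in> exts C M N" and "isomorphic C L' L"
proof -
  have "Ext1_mid C M N L \<noteq> {}"
    using assms unfolding hall_coeff_def by (metis card.empty of_nat_0 div_0)
  then obtain cl t where cl: "cl \<in> Ext1 C M N" and t: "t \<in> cl" and iso: "isomorphic C (fst t) L"
    unfolding Ext1_mid_def by (auto simp: case_prod_beta)
  obtain x where "cl = ext_rel C M N `` {x}"
    using cl unfolding Ext1_def quotient_def by blast
  with t have "t \<in> exts C M N"
    unfolding ext_rel_def by (auto simp: case_prod_beta)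
  with iso show ?thesis using that by (cases t) auto
qed

lemma hall_mult_nonzero:
  assumes "hall_mult C f g c \<noteq> 0"
  obtains a b L i p where "c \<in> iso_classes C (\<lambda>_. True)" and "f a \<noteq> 0" and "g b \<noteq> 0"
    and "(L, i, p) \<in> exts C (rep a) (rep b)" and "isomorphic C L (rep c)"
proof -
  have c: "c \<in> iso_classes C (\<lambda>_. True)"
    using assms unfolding hall_mult_def by (auto split: if_splits)
  with assms have "(\<Sum>a\<in>{a. f a \<noteq> 0}. \<Sum>b\<in>{b. g b \<noteq> 0}.
      f a * g b * hall_coeff C (rep a) (rep b) (rep c)) \<noteq> 0"
    unfolding hall_mult_def by simp
  then obtain a where fa: "f a \<noteq> 0"
    and "(\<Sum>b\<in>{b. g b \<noteq> 0}. f a * g b * hall_coeff C (rep a) (rep b) (rep c)) \<noteq> 0"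
    using sum.not_neutral_contains_not_neutral by blast
  then obtain b where gb: "g b \<noteq> 0"
    and "f a * g b * hall_coeff C (rep a) (rep b) (rep c) \<noteq> 0"
    using sum.not_neutral_contains_not_neutral by blast
  then have "hall_coeff C (rep a) (rep b) (rep c) \<noteq> 0" by simp
  then obtain L i p where "(L, i, p) \<in> exts C (rep a) (rep b)" and "isomorphic C L (rep c)"
    by (rule hall_coeff_nonzero)
  with c fa gb show ?thesis by (rule that)
qed

section \<open>Categories\<close>

locale category =
  fixes C :: "('o, 'a, 'k) kcat"
  assumes is_category: "is_category C"
begin

abbreviation cat_comp (infixl "\<cdot>" 70) where "g \<cdot> f \<equiv> cmp C g f"

lemma comp_closed:
  "X \<in> Ob C \<Longrightarrow> Y \<in> Ob C \<Longrightarrow> Z \<in> Ob C \<Longrightarrow> f \<in> Hom C X Y \<Longrightarrow> g \<in> Hom C Y Z \<Longrightarrow> g \<cdot> f \<in> Hom C X Z"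
  using is_category unfolding is_category_def by simp

lemma comp_assoc:
  "W \<in> Ob C \<Longrightarrow> X \<in> Ob C \<Longrightarrow> Y \<in> Ob C \<Longrightarrow> Z \<in> Ob C \<Longrightarrow>
   f \<in> Hom C W X \<Longrightarrow> g \<in> Hom C X Y \<Longrightarrow> h \<in> Hom C Y Z \<Longrightarrow> h \<cdot> (g \<cdot> f) = (h \<cdot> g) \<cdot> f"
  using is_category unfolding is_category_def by simp

lemma idt_closed: "X \<in> Ob C \<Longrightarrow> idt C X \<in> Hom C X X"
  using is_category unfolding is_category_def by simp

lemma comp_idt: "X \<in> Ob C \<Longrightarrow> Y \<in> Ob C \<Longrightarrow> f \<in> Hom C X Y \<Longrightarrow> f \<cdot> idt C X = f"
  using is_category unfolding is_category_def by simp

lemma idt_comp: "X \<in> Ob C \<Longrightarrow> Y \<in> Ob C \<Longrightarrow> f \<in> Hom C X Y \<Longrightarrow> idt C Y \<cdot> f = f"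
  using is_category unfolding is_category_def by simp

lemma comp_left_inverses:
  assumes A: "A \<in> Ob C" and B: "B \<in> Ob C" and Z: "Z \<in> Ob C"
    and a: "a \<in> Hom C A B" and b: "b \<in> Hom C B Z" and a': "a' \<in> Hom C B A" and b': "b' \<in> Hom C Z B"
    and "a' \<cdot> a = idt C A" and "b' \<cdot> b = idt C B"
  shows "(a' \<cdot> b') \<cdot> (b \<cdot> a) = idt C A"
proof -
  have "(a' \<cdot> b') \<cdot> (b \<cdot> a) = a' \<cdot> ((b' \<cdot> b) \<cdot> a)"
    using comp_assoc[OF A Z B A comp_closed[OF A B Z a b] b' a'] comp_assoc[OF A B Z B a b b']
      by simp
  with assms show ?thesis using idt_comp[OF A B a] by simp
qed

lemma isomorphic_refl: "X \<in> Ob C \<Longrightarrow> isomorphic C X X"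
  unfolding isomorphic_def using idt_closed comp_idt by blast

lemma isomorphic_sym: "isomorphic C X Y \<Longrightarrow> isomorphic C Y X"
  unfolding isomorphic_def by blast

lemma isomorphic_trans:
  assumes "isomorphic C X Y" and "isomorphic C Y Z"
  shows "isomorphic C X Z"
proof -
  from assms obtain f f' g g' where X: "X \<in> Ob C" and Y: "Y \<in> Ob C" and Z: "Z \<in> Ob C"
    and f: "f \<in> Hom C X Y" and f': "f' \<in> Hom C Y X" and g: "g \<in> Hom C Y Z" and g': "g' \<in> Hom C Z Y"
    and "f' \<cdot> f = idt C X" "f \<cdot> f' = idt C Y" "g' \<cdot> g = idt C Y" "g \<cdot> g' = idt C Z"
    unfolding isomorphic_def by blast
  then have "(f' \<cdot> g') \<cdot> (g \<cdot> f) = idt C X" and "(g \<cdot> f) \<cdot> (f' \<cdot> g') = idt C Z"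
    using comp_left_inverses[OF X Y Z f g f' g'] comp_left_inverses[OF Z Y X g' f' g f] by simp_all
  then show ?thesis
    unfolding isomorphic_def using X Z comp_closed[OF X Y Z f g] comp_closed[OF Z Y X g' f']
      by blast
qed

lemma isocls_eq: "isomorphic C X Y \<Longrightarrow> isocls C X = isocls C Y"
  unfolding isocls_def by (auto intro: isomorphic_trans isomorphic_sym)

lemma isomorphic_rep_isocls:
  assumes "X \<in> Ob C"
  shows "isomorphic C X (rep (isocls C X))"
proof -
  have "X \<in> isocls C X" unfolding isocls_def using isomorphic_refl[OF assms] by simp
  then have "rep (isocls C X) \<in> isocls C X" unfolding rep_def by (rule someI)
  then show ?thesis unfolding isocls_def by simp
qed

lemma rep_iso_classes:
  assumes "a \<in> iso_classes C P" and P_iso: "\<And>X Y. isomorphic C X Y \<Longrightarrow> P X \<Longrightarrow> P Y"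
  shows "rep a \<in> Ob C" and "P (rep a)" and "a = isocls C (rep a)"
proof -
  obtain X where X: "X \<in> Ob C" "P X" and a: "a = isocls C X"
    using assms(1) unfolding iso_classes_def by blast
  have iso: "isomorphic C X (rep a)" using isomorphic_rep_isocls[OF X(1)] unfolding a .
  then show "rep a \<in> Ob C" unfolding isomorphic_def by blast
  show "P (rep a)" using P_iso[OF iso X(2)] .
  show "a = isocls C (rep a)" using isocls_eq[OF iso] unfolding a .
qed

lemma hall_mult_in_hall_span:
  assumes f: "f \<in> hall_span C S" and g: "g \<in> hall_span C S'"
    and S_iso: "\<And>X Y. isomorphic C X Y \<Longrightarrow> S X \<Longrightarrow> S Y"
    and S'_iso: "\<And>X Y. isomorphic C X Y \<Longrightarrow> S' X \<Longrightarrow> S' Y"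
    and ext: "\<And>X Y L i p. X \<in> Ob C \<Longrightarrow> S X \<Longrightarrow> Y \<in> Ob C \<Longrightarrow> S' Y \<Longrightarrow> (L, i, p) \<in> exts C X Y \<Longrightarrow> T L"
    and fin: "\<And>X Y. X \<in> Ob C \<Longrightarrow> S X \<Longrightarrow> Y \<in> Ob C \<Longrightarrow> S' Y \<Longrightarrow>
      finite {isocls C L | L i p. (L, i, p) \<in> exts C X Y}"
  shows "hall_mult C f g \<in> hall_span C T"
proof -
  define E where "E a b = {isocls C L | L i p. (L, i, p) \<in> exts C (rep a) (rep b)}" for a b
  have supp_f: "finite {a. f a \<noteq> 0}" "{a. f a \<noteq> 0} \<subseteq> iso_classes C S"
    and supp_g: "finite {b. g b \<noteq> 0}" "{b. g b \<noteq> 0} \<subseteq> iso_classes C S'"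
    using f g unfolding hall_span_def by auto
  have support: "c \<in> iso_classes C T \<and> (\<exists>a b. f a \<noteq> 0 \<and> g b \<noteq> 0 \<and> c \<in> E a b)"
    if nonzero: "hall_mult C f g c \<noteq> 0" for c
  proof -
    obtain a b L i p where c: "c \<in> iso_classes C (\<lambda>_. True)" and fa: "f a \<noteq> 0" and gb: "g b \<noteq> 0"
      and ex: "(L, i, p) \<in> exts C (rep a) (rep b)" and iso: "isomorphic C L (rep c)"
      using hall_mult_nonzero[OF nonzero] .
    have "rep a \<in> Ob C" "S (rep a)" "rep b \<in> Ob C" "S' (rep b)"
      using rep_iso_classes[of a S] rep_iso_classes[of b S'] supp_f supp_g fa gb S_iso S'_iso
        by auto
    then have "T L" using ext ex by blast
    moreover have "c = isocls C L" using rep_iso_classes(3)[OF c] isocls_eq[OF iso] by simp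
    moreover have "L \<in> Ob C" using iso unfolding isomorphic_def by simp
    ultimately show ?thesis unfolding iso_classes_def E_def using fa gb ex by blast
  qed
  have "finite (E a b)" if "f a \<noteq> 0" and "g b \<noteq> 0" for a b
    unfolding E_def using fin rep_iso_classes[of a S] rep_iso_classes[of b S'] supp_f supp_g
      that S_iso S'_iso by blast
  then have "finite (\<Union>a\<in>{a. f a \<noteq> 0}. \<Union>b\<in>{b. g b \<noteq> 0}. E a b)"
    using supp_f supp_g by blast
  moreover have "{c. hall_mult C f g c \<noteq> 0} \<subseteq> (\<Union>a\<in>{a. f a \<noteq> 0}. \<Union>b\<in>{b. g b \<noteq> 0}. E a b)"
    using support by blast
  ultimately show ?thesis
    unfolding hall_span_def using support by (auto intro: finite_subset)
qed

lemma projective_retract: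
  assumes P: "is_projective C P" and P': "P' \<in> Ob C"
    and \<theta>: "\<theta> \<in> Hom C P P'" and \<psi>: "\<psi> \<in> Hom C P' P" and retract: "\<theta> \<cdot> \<psi> = idt C P'"
  shows "is_projective C P'"
  unfolding is_projective_def
proof (intro conjI P' ballI allI impI)
  have PO: "P \<in> Ob C" using P unfolding is_projective_def by simp
  fix A B e f assume A: "A \<in> Ob C" and B: "B \<in> Ob C" and e: "is_epi C A B e" and f: "f \<in> Hom C P' B"
  have eH: "e \<in> Hom C A B" using e unfolding is_epi_def by simp
  obtain g where g: "g \<in> Hom C P A" "e \<cdot> g = f \<cdot> \<theta>"
    using P A B e comp_closed[OF PO P' B \<theta> f] unfolding is_projective_def by blast
  have "e \<cdot> (g \<cdot> \<psi>) = (f \<cdot> \<theta>) \<cdot> \<psi>" using comp_assoc[OF P' PO A B \<psi> g(1) eH] g(2) by simp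
  also have "\<dots> = f" using comp_assoc[OF P' PO P' B \<psi> \<theta> f] retract comp_idt[OF P' B f] by simp
  finally show "\<exists>g\<in>Hom C P' A. e \<cdot> g = f" using comp_closed[OF P' PO A \<psi> g(1)] by blast
qed

lemma projective_epi_splits:
  assumes "is_projective C M" and "L \<in> Ob C" and "is_epi C L M p"
  shows "\<exists>s\<in>Hom C M L. p \<cdot> s = idt C M"
  using assms unfolding is_projective_def by (meson idt_closed)

lemma conjugate_comp:
  assumes O: "X0 \<in> Ob C" "X1 \<in> Ob C" "X2 \<in> Ob C" "Y0 \<in> Ob C" "Y1 \<in> Ob C" "Y2 \<in> Ob C"
    and H: "\<psi>0 \<in> Hom C Y0 X0" "d0 \<in> Hom C X0 X1" "\<theta>1 \<in> Hom C X1 Y1" "\<psi>1 \<in> Hom C Y1 X1"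
      "d1 \<in> Hom C X1 X2" "\<theta>2 \<in> Hom C X2 Y2"
    and inv: "\<psi>1 \<cdot> \<theta>1 = idt C X1"
  shows "((\<theta>2 \<cdot> d1) \<cdot> \<psi>1) \<cdot> ((\<theta>1 \<cdot> d0) \<cdot> \<psi>0) = (\<theta>2 \<cdot> (d1 \<cdot> d0)) \<cdot> \<psi>0"
proof -
  have a: "\<theta>2 \<cdot> d1 \<in> Hom C X1 Y2" using comp_closed[OF O(2,3,6) H(5,6)] .
  have b: "\<theta>1 \<cdot> d0 \<in> Hom C X0 Y1" using comp_closed[OF O(1,2,5) H(2,3)] .
  have "((\<theta>2 \<cdot> d1) \<cdot> \<psi>1) \<cdot> ((\<theta>1 \<cdot> d0) \<cdot> \<psi>0) = ((\<theta>2 \<cdot> d1) \<cdot> (\<psi>1 \<cdot> (\<theta>1 \<cdot> d0))) \<cdot> \<psi>0"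
    using comp_assoc[OF O(4,1,5,6) H(1) b comp_closed[OF O(5,2,6) H(4) a]]
      comp_assoc[OF O(1,5,2,6) b H(4) a] by simp
  also have "\<psi>1 \<cdot> (\<theta>1 \<cdot> d0) = d0"
    using comp_assoc[OF O(1,2,5,2) H(2,3,4)] inv idt_comp[OF O(1,2) H(2)] by simp
  finally show ?thesis using comp_assoc[OF O(1,2,3,6) H(2,5,6)] by simp
qed

end

section \<open>k-linear categories and biproducts\<close>

definition biproduct_diagram :: "('o, 'a, 'k) kcat \<Rightarrow> 'o \<Rightarrow> 'o \<Rightarrow> 'o \<Rightarrow> 'a \<Rightarrow> 'a \<Rightarrow> 'a \<Rightarrow> 'a \<Rightarrow> bool"
  where "biproduct_diagram C X Y S i1 i2 p1 p2 \<longleftrightarrow> S \<in> Ob C \<and>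
     i1 \<in> Hom C X S \<and> i2 \<in> Hom C Y S \<and> p1 \<in> Hom C S X \<and> p2 \<in> Hom C S Y \<and>
     cmp C p1 i1 = idt C X \<and> cmp C p2 i2 = idt C Y \<and>
     cmp C p1 i2 = zer C Y X \<and> cmp C p2 i1 = zer C X Y \<and>
     add C (cmp C i1 p1) (cmp C i2 p2) = idt C S"

lemma is_biproduct_iff:
  "is_biproduct C X Y S \<longleftrightarrow> (\<exists>i1 i2 p1 p2. biproduct_diagram C X Y S i1 i2 p1 p2)"
  unfolding is_biproduct_def biproduct_diagram_def by blast

locale klinear_category = category C for C :: "('o, 'a, 'k::field) kcat" +
  assumes is_klinear: "is_klinear C"
begin

abbreviation hom_add (infixl "\<oplus>" 65) where "f \<oplus> g \<equiv> add C f g"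

lemmas klinear_Hom = is_klinear[unfolded is_klinear_def, THEN conjunct1, rule_format]
lemmas klinear_comp = is_klinear[unfolded is_klinear_def, THEN conjunct2, rule_format]

context
  fixes X Y assumes X: "X \<in> Ob C" and Y: "Y \<in> Ob C"
begin

lemma zer_closed: "zer C X Y \<in> Hom C X Y"
  using klinear_Hom[OF X Y] by auto

lemma add_closed: "f \<in> Hom C X Y \<Longrightarrow> g \<in> Hom C X Y \<Longrightarrow> f \<oplus> g \<in> Hom C X Y"
  using klinear_Hom[OF X Y] by auto

lemma neg_closed: "f \<in> Hom C X Y \<Longrightarrow> neg C f \<in> Hom C X Y"
  using klinear_Hom[OF X Y] by auto

lemma add_assoc: "f \<in> Hom C X Y \<Longrightarrow> g \<in> Hom C X Y \<Longrightarrow> h \<in> Hom C X Y \<Longrightarrow> (f \<oplus> g) \<oplus> h = f \<oplus> (g \<oplus> h)"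
  using klinear_Hom[OF X Y] by auto

lemma add_commute: "f \<in> Hom C X Y \<Longrightarrow> g \<in> Hom C X Y \<Longrightarrow> f \<oplus> g = g \<oplus> f"
  using klinear_Hom[OF X Y] by auto

lemma add_zer: "f \<in> Hom C X Y \<Longrightarrow> f \<oplus> zer C X Y = f"
  using klinear_Hom[OF X Y] by auto

lemma add_neg: "f \<in> Hom C X Y \<Longrightarrow> f \<oplus> neg C f = zer C X Y"
  using klinear_Hom[OF X Y] by auto

lemma zer_add: "f \<in> Hom C X Y \<Longrightarrow> zer C X Y \<oplus> f = f"
  using add_commute[OF zer_closed] add_zer by simp

lemma neg_add: "f \<in> Hom C X Y \<Longrightarrow> neg C f \<oplus> f = zer C X Y"
  using add_commute[OF neg_closed] add_neg by simp

lemma add_left_cancel: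
  assumes "f \<in> Hom C X Y" "g \<in> Hom C X Y" "h \<in> Hom C X Y" and "f \<oplus> g = f \<oplus> h"
  shows "g = h"
proof -
  have "g = (neg C f \<oplus> f) \<oplus> g" using assms by (simp add: neg_add zer_add)
  also have "\<dots> = neg C f \<oplus> (f \<oplus> h)" using assms by (simp add: add_assoc neg_closed)
  also have "\<dots> = h" using assms by (simp flip: add_assoc add: neg_closed neg_add zer_add)
  finally show ?thesis .
qed

lemma add_idem_eq_zer: "f \<in> Hom C X Y \<Longrightarrow> f \<oplus> f = f \<Longrightarrow> f = zer C X Y"
  using add_left_cancel[of f f "zer C X Y"] add_zer zer_closed by simp

lemma add_neg_add: "f \<in> Hom C X Y \<Longrightarrow> g \<in> Hom C X Y \<Longrightarrow> (f \<oplus> neg C g) \<oplus> g = f"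
  by (simp add: add_assoc neg_add neg_closed add_zer)

lemma neg_unique: "f \<in> Hom C X Y \<Longrightarrow> g \<in> Hom C X Y \<Longrightarrow> f \<oplus> g = zer C X Y \<Longrightarrow> g = neg C f"
  using add_left_cancel[of f g "neg C f"] add_neg neg_closed by simp

lemma neg_zer: "neg C (zer C X Y) = zer C X Y"
  using neg_unique[of "zer C X Y" "zer C X Y"] add_zer zer_closed by simp

end

lemma add_comp:
  "X \<in> Ob C \<Longrightarrow> Y \<in> Ob C \<Longrightarrow> Z \<in> Ob C \<Longrightarrow> f \<in> Hom C X Y \<Longrightarrow> g \<in> Hom C Y Z \<Longrightarrow> g' \<in> Hom C Y Z \<Longrightarrow>
   (g \<oplus> g') \<cdot> f = (g \<cdot> f) \<oplus> (g' \<cdot> f)"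
  by (simp add: klinear_comp)

lemma comp_add:
  "X \<in> Ob C \<Longrightarrow> Y \<in> Ob C \<Longrightarrow> Z \<in> Ob C \<Longrightarrow> f \<in> Hom C X Y \<Longrightarrow> f' \<in> Hom C X Y \<Longrightarrow> g \<in> Hom C Y Z \<Longrightarrow>
   g \<cdot> (f \<oplus> f') = (g \<cdot> f) \<oplus> (g \<cdot> f')"
  by (simp add: klinear_comp)

lemma zer_comp:
  assumes X: "X \<in> Ob C" and Y: "Y \<in> Ob C" and Z: "Z \<in> Ob C" and f: "f \<in> Hom C X Y"
  shows "zer C Y Z \<cdot> f = zer C X Z"
proof -
  have z: "zer C Y Z \<in> Hom C Y Z" using zer_closed[OF Y Z] .
  have "(zer C Y Z \<cdot> f) \<oplus> (zer C Y Z \<cdot> f) = zer C Y Z \<cdot> f"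
    using add_comp[OF X Y Z f z z] add_zer[OF Y Z z] by simp
  then show ?thesis using add_idem_eq_zer[OF X Z] comp_closed[OF X Y Z f z] by simp
qed

lemma comp_zer:
  assumes X: "X \<in> Ob C" and Y: "Y \<in> Ob C" and Z: "Z \<in> Ob C" and g: "g \<in> Hom C Y Z"
  shows "g \<cdot> zer C X Y = zer C X Z"
proof -
  have z: "zer C X Y \<in> Hom C X Y" using zer_closed[OF X Y] .
  have "(g \<cdot> zer C X Y) \<oplus> (g \<cdot> zer C X Y) = g \<cdot> zer C X Y"
    using comp_add[OF X Y Z z z g] add_zer[OF X Y z] by simp
  then show ?thesis using add_idem_eq_zer[OF X Z] comp_closed[OF X Y Z z g] by simp
qed

lemma neg_comp:
  assumes X: "X \<in> Ob C" and Y: "Y \<in> Ob C" and Z: "Z \<in> Ob C" and f: "f \<in> Hom C X Y"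
    and g: "g \<in> Hom C Y Z"
  shows "neg C g \<cdot> f = neg C (g \<cdot> f)"
proof -
  have n: "neg C g \<in> Hom C Y Z" using neg_closed[OF Y Z g] .
  have "(g \<cdot> f) \<oplus> (neg C g \<cdot> f) = zer C X Z"
    using add_comp[OF X Y Z f g n] add_neg[OF Y Z g] zer_comp[OF X Y Z f] by simp
  then show ?thesis using neg_unique[OF X Z] comp_closed[OF X Y Z f] g n by blast
qed

lemma comp_neg:
  assumes X: "X \<in> Ob C" and Y: "Y \<in> Ob C" and Z: "Z \<in> Ob C" and f: "f \<in> Hom C X Y"
    and g: "g \<in> Hom C Y Z"
  shows "g \<cdot> neg C f = neg C (g \<cdot> f)"
proof -
  have n: "neg C f \<in> Hom C X Y" using neg_closed[OF X Y f] .
  have "(g \<cdot> f) \<oplus> (g \<cdot> neg C f) = zer C X Z"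
    using comp_add[OF X Y Z f n g] add_neg[OF X Y f] comp_zer[OF X Y Z g] by simp
  then show ?thesis using neg_unique[OF X Z] comp_closed[OF X Y Z _ g] f n by blast
qed

lemma comp_section_complement:
  assumes L: "L \<in> Ob C" and M: "M \<in> Ob C" and p: "p \<in> Hom C L M" and s: "s \<in> Hom C M L"
    and ps: "p \<cdot> s = idt C M"
  shows "p \<cdot> (idt C L \<oplus> neg C (s \<cdot> p)) = zer C L M"
proof -
  have sp: "s \<cdot> p \<in> Hom C L L" using comp_closed[OF L M L p s] .
  have "p \<cdot> (idt C L \<oplus> neg C (s \<cdot> p)) = p \<oplus> neg C ((p \<cdot> s) \<cdot> p)"
    using comp_add[OF L L M idt_closed[OF L] neg_closed[OF L L sp] p] comp_idt[OF L M p]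
      comp_neg[OF L L M sp p] comp_assoc[OF L M L M p s p] by simp
  then show ?thesis using ps idt_comp[OF L M p] add_neg[OF L M p] by simp
qed

(* The retraction r onto N is obtained by factoring the idempotent 1 - s p through i. *)

lemma is_biproduct_if_split:
  assumes N: "N \<in> Ob C" and L: "L \<in> Ob C" and M: "M \<in> Ob C"
    and i: "i \<in> Hom C N L" and p: "p \<in> Hom C L M" and s: "s \<in> Hom C M L"
    and ps: "p \<cdot> s = idt C M" and pi: "p \<cdot> i = zer C N M" and mono: "is_mono C N L i"
    and ker: "\<And>u. u \<in> Hom C L L \<Longrightarrow> p \<cdot> u = zer C L M \<Longrightarrow> \<exists>v\<in>Hom C L N. i \<cdot> v = u"
  shows "is_biproduct C N M L"
proof -
  define t where "t = idt C L \<oplus> neg C (s \<cdot> p)"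
  have sp: "s \<cdot> p \<in> Hom C L L" using comp_closed[OF L M L p s] .
  have t: "t \<in> Hom C L L" unfolding t_def
    using add_closed[OF L L idt_closed[OF L] neg_closed[OF L L sp]] .
  have cancel: "g = h" if "W \<in> Ob C" "g \<in> Hom C W N" "h \<in> Hom C W N" "i \<cdot> g = i \<cdot> h" for W g h
    using mono that unfolding is_mono_def by blast
  obtain r where r: "r \<in> Hom C L N" and ir: "i \<cdot> r = t"
    using ker[OF t] comp_section_complement[OF L M p s ps] unfolding t_def by blast
  have t_i: "t \<cdot> i = i"
    unfolding t_def
    using add_comp[OF N L L i idt_closed[OF L] neg_closed[OF L L sp]] idt_comp[OF N L i]
      neg_comp[OF N L L i sp] comp_assoc[OF N L M L i p s] pi comp_zer[OF N M L s]
      neg_zer[OF N L] add_zer[OF N L i] by simp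
  have t_s: "t \<cdot> s = zer C M L"
    unfolding t_def
    using add_comp[OF M L L s idt_closed[OF L] neg_closed[OF L L sp]] idt_comp[OF M L s]
      neg_comp[OF M L L s sp] comp_assoc[OF M L M L s p s] ps comp_idt[OF M L s] add_neg[OF M L s]
    by simp
  have ri: "r \<cdot> i = idt C N"
    using cancel[OF N comp_closed[OF N L N i r] idt_closed[OF N]]
      comp_assoc[OF N L N L i r i] ir t_i comp_idt[OF N L i] by simp
  have rs: "r \<cdot> s = zer C M N"
    using cancel[OF M comp_closed[OF M L N s r] zer_closed[OF M N]]
      comp_assoc[OF M L N L s r i] ir t_s comp_zer[OF M N L i] by simp
  have "(i \<cdot> r) \<oplus> (s \<cdot> p) = idt C L"
    using ir add_neg_add[OF L L idt_closed[OF L] sp] unfolding t_def by simp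
  then show ?thesis
    unfolding is_biproduct_def using L i s r p ri ps rs pi by blast
qed

lemma projective_biproduct:
  assumes PX: "is_projective C X" and PY: "is_projective C Y" and B: "is_biproduct C X Y S"
  shows "is_projective C S"
proof -
  have X: "X \<in> Ob C" and Y: "Y \<in> Ob C" using PX PY unfolding is_projective_def by auto
  from B obtain i1 i2 p1 p2 where S: "S \<in> Ob C" and i1: "i1 \<in> Hom C X S" and i2: "i2 \<in> Hom C Y S"
    and p1: "p1 \<in> Hom C S X" and p2: "p2 \<in> Hom C S Y" and sum: "(i1 \<cdot> p1) \<oplus> (i2 \<cdot> p2) = idt C S"
    unfolding is_biproduct_def by blast
  show ?thesis unfolding is_projective_def
  proof (intro conjI S ballI allI impI)
    fix A B e f assume A: "A \<in> Ob C" and B: "B \<in> Ob C" and e: "is_epi C A B e"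
      and f: "f \<in> Hom C S B"
    have eH: "e \<in> Hom C A B" using e unfolding is_epi_def by simp
    obtain g1 where g1: "g1 \<in> Hom C X A" "e \<cdot> g1 = f \<cdot> i1"
      using PX A B e comp_closed[OF X S B i1 f] unfolding is_projective_def by blast
    obtain g2 where g2: "g2 \<in> Hom C Y A" "e \<cdot> g2 = f \<cdot> i2"
      using PY A B e comp_closed[OF Y S B i2 f] unfolding is_projective_def by blast
    have a1: "g1 \<cdot> p1 \<in> Hom C S A" using comp_closed[OF S X A p1 g1(1)] .
    have a2: "g2 \<cdot> p2 \<in> Hom C S A" using comp_closed[OF S Y A p2 g2(1)] .
    have "e \<cdot> ((g1 \<cdot> p1) \<oplus> (g2 \<cdot> p2)) = (e \<cdot> (g1 \<cdot> p1)) \<oplus> (e \<cdot> (g2 \<cdot> p2))"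
      using comp_add[OF S A B a1 a2 eH] .
    also have "e \<cdot> (g1 \<cdot> p1) = f \<cdot> (i1 \<cdot> p1)"
      using comp_assoc[OF S X A B p1 g1(1) eH] g1(2) comp_assoc[OF S X S B p1 i1 f] by simp
    also have "e \<cdot> (g2 \<cdot> p2) = f \<cdot> (i2 \<cdot> p2)"
      using comp_assoc[OF S Y A B p2 g2(1) eH] g2(2) comp_assoc[OF S Y S B p2 i2 f] by simp
    also have "(f \<cdot> (i1 \<cdot> p1)) \<oplus> (f \<cdot> (i2 \<cdot> p2)) = f"
      using comp_add[OF S S B comp_closed[OF S X S p1 i1] comp_closed[OF S Y S p2 i2] f] sum
        comp_idt[OF S B f] by simp
    finally show "\<exists>g\<in>Hom C S A. e \<cdot> g = f" using add_closed[OF S A a1 a2] by blast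
  qed
qed

lemma biproduct_comparison_inverse:
  assumes X: "X \<in> Ob C" and Y: "Y \<in> Ob C"
    and B: "biproduct_diagram C X Y S i1 i2 p1 p2" and B': "biproduct_diagram C X Y S' j1 j2 q1 q2"
  shows "((i1 \<cdot> q1) \<oplus> (i2 \<cdot> q2)) \<cdot> ((j1 \<cdot> p1) \<oplus> (j2 \<cdot> p2)) = idt C S"
proof -
  from B have S: "S \<in> Ob C" and i1: "i1 \<in> Hom C X S" and i2: "i2 \<in> Hom C Y S"
    and p1: "p1 \<in> Hom C S X" and p2: "p2 \<in> Hom C S Y" and sum: "(i1 \<cdot> p1) \<oplus> (i2 \<cdot> p2) = idt C S"
    unfolding biproduct_diagram_def by auto
  from B' have S': "S' \<in> Ob C" and j1: "j1 \<in> Hom C X S'" and j2: "j2 \<in> Hom C Y S'"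
    and q1: "q1 \<in> Hom C S' X" and q2: "q2 \<in> Hom C S' Y"
    and e: "q1 \<cdot> j1 = idt C X" "q2 \<cdot> j2 = idt C Y" "q1 \<cdot> j2 = zer C Y X" "q2 \<cdot> j1 = zer C X Y"
    unfolding biproduct_diagram_def by auto
  define \<psi> where "\<psi> = (i1 \<cdot> q1) \<oplus> (i2 \<cdot> q2)"
  have a1: "i1 \<cdot> q1 \<in> Hom C S' S" using comp_closed[OF S' X S q1 i1] .
  have a2: "i2 \<cdot> q2 \<in> Hom C S' S" using comp_closed[OF S' Y S q2 i2] .
  have \<psi>: "\<psi> \<in> Hom C S' S" unfolding \<psi>_def using add_closed[OF S' S a1 a2] .
  have \<psi>_j1: "\<psi> \<cdot> j1 = i1"
    unfolding \<psi>_def using add_comp[OF X S' S j1 a1 a2] comp_assoc[OF X S' X S j1 q1 i1] e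
      comp_idt[OF X S i1] comp_assoc[OF X S' Y S j1 q2 i2] comp_zer[OF X Y S i2] add_zer[OF X S i1]
    by simp
  have \<psi>_j2: "\<psi> \<cdot> j2 = i2"
    unfolding \<psi>_def using add_comp[OF Y S' S j2 a1 a2] comp_assoc[OF Y S' X S j2 q1 i1] e
      comp_zer[OF Y X S i1] comp_assoc[OF Y S' Y S j2 q2 i2] comp_idt[OF Y S i2] zer_add[OF Y S i2]
    by simp
  have "\<psi> \<cdot> ((j1 \<cdot> p1) \<oplus> (j2 \<cdot> p2)) = (\<psi> \<cdot> (j1 \<cdot> p1)) \<oplus> (\<psi> \<cdot> (j2 \<cdot> p2))"
    using comp_add[OF S S' S comp_closed[OF S X S' p1 j1] comp_closed[OF S Y S' p2 j2] \<psi>] .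
  also have "\<dots> = (i1 \<cdot> p1) \<oplus> (i2 \<cdot> p2)"
    using comp_assoc[OF S X S' S p1 j1 \<psi>] \<psi>_j1 comp_assoc[OF S Y S' S p2 j2 \<psi>] \<psi>_j2 by simp
  finally show ?thesis using sum unfolding \<psi>_def by simp
qed

lemma biproducts_isomorphic:
  assumes X: "X \<in> Ob C" and Y: "Y \<in> Ob C" and "is_biproduct C X Y S" and "is_biproduct C X Y S'"
  shows "isomorphic C S S'"
proof -
  obtain i1 i2 p1 p2 j1 j2 q1 q2 where B: "biproduct_diagram C X Y S i1 i2 p1 p2"
    and B': "biproduct_diagram C X Y S' j1 j2 q1 q2"
    using assms(3,4) unfolding is_biproduct_iff by blast
  from B B' have S: "S \<in> Ob C" and S': "S' \<in> Ob C"
    and "i1 \<in> Hom C X S" "i2 \<in> Hom C Y S" "p1 \<in> Hom C S X" "p2 \<in> Hom C S Y"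
    and "j1 \<in> Hom C X S'" "j2 \<in> Hom C Y S'" "q1 \<in> Hom C S' X" "q2 \<in> Hom C S' Y"
    unfolding biproduct_diagram_def by auto
  then have "(j1 \<cdot> p1) \<oplus> (j2 \<cdot> p2) \<in> Hom C S S'" and "(i1 \<cdot> q1) \<oplus> (i2 \<cdot> q2) \<in> Hom C S' S"
    using add_closed comp_closed X Y by meson+
  then show ?thesis
    unfolding isomorphic_def using S S'
      biproduct_comparison_inverse[OF X Y B B'] biproduct_comparison_inverse[OF X Y B' B] by blast
qed

(* Maps out of and into the cone W + W of id_W, whose differential is i2 p1. *)

context
  fixes W S i1 i2 p1 p2
  assumes W: "W \<in> Ob C" and diagram: "biproduct_diagram C W W S i1 i2 p1 p2"
begin

private lemma
  shows S: "S \<in> Ob C" and i1: "i1 \<in> Hom C W S" and i2: "i2 \<in> Hom C W S"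
    and p1: "p1 \<in> Hom C S W" and p2: "p2 \<in> Hom C S W"
    and e11: "p1 \<cdot> i1 = idt C W" and e22: "p2 \<cdot> i2 = idt C W"
    and e12: "p1 \<cdot> i2 = zer C W W" and e21: "p2 \<cdot> i1 = zer C W W"
  using diagram unfolding biproduct_diagram_def by auto

lemma cone_diff_square: "(i2 \<cdot> p1) \<cdot> (i2 \<cdot> p1) = zer C S S"
  using comp_assoc[OF S S W S comp_closed[OF S W S p1 i2] p1 i2] comp_assoc[OF S W S W p1 i2 p1]
    e12 zer_comp[OF S W W p1] comp_zer[OF S W S i2] by simp

lemma cone_out_closed:
  assumes N: "N \<in> Ob C" and e: "e \<in> Hom C N N" and g: "g \<in> Hom C W N"
  shows "(g \<cdot> p1) \<oplus> ((e \<cdot> g) \<cdot> p2) \<in> Hom C S N"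
  using add_closed[OF S N comp_closed[OF S W N p1 g]
      comp_closed[OF S W N p2 comp_closed[OF W N N g e]]] .

lemma cone_out_chain:
  assumes N: "N \<in> Ob C" and e: "e \<in> Hom C N N" and ee: "e \<cdot> e = zer C N N" and g: "g \<in> Hom C W N"
  shows "e \<cdot> ((g \<cdot> p1) \<oplus> ((e \<cdot> g) \<cdot> p2)) = ((g \<cdot> p1) \<oplus> ((e \<cdot> g) \<cdot> p2)) \<cdot> (i2 \<cdot> p1)"
proof -
  have eg: "e \<cdot> g \<in> Hom C W N" using comp_closed[OF W N N g e] .
  have a1: "g \<cdot> p1 \<in> Hom C S N" using comp_closed[OF S W N p1 g] .
  have a2: "(e \<cdot> g) \<cdot> p2 \<in> Hom C S N" using comp_closed[OF S W N p2 eg] .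
  have "e \<cdot> ((g \<cdot> p1) \<oplus> ((e \<cdot> g) \<cdot> p2)) = (e \<cdot> (g \<cdot> p1)) \<oplus> (e \<cdot> ((e \<cdot> g) \<cdot> p2))"
    using comp_add[OF S N N a1 a2 e] .
  also have "e \<cdot> (g \<cdot> p1) = (e \<cdot> g) \<cdot> p1" using comp_assoc[OF S W N N p1 g e] .
  also have "e \<cdot> ((e \<cdot> g) \<cdot> p2) = (e \<cdot> (e \<cdot> g)) \<cdot> p2" using comp_assoc[OF S W N N p2 eg e] .
  also have "e \<cdot> (e \<cdot> g) = zer C W N" using comp_assoc[OF W N N N g e e] ee zer_comp[OF W N N g]
    by simp
  also have "zer C W N \<cdot> p2 = zer C S N" using zer_comp[OF S W N p2] .
  also have "((e \<cdot> g) \<cdot> p1) \<oplus> zer C S N = (e \<cdot> g) \<cdot> p1"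
    using add_zer[OF S N comp_closed[OF S W N p1 eg]] .
  finally have L: "e \<cdot> ((g \<cdot> p1) \<oplus> ((e \<cdot> g) \<cdot> p2)) = (e \<cdot> g) \<cdot> p1" .
  have G: "(g \<cdot> p1) \<oplus> ((e \<cdot> g) \<cdot> p2) \<in> Hom C S N" using cone_out_closed[OF N e g] .
  have "((g \<cdot> p1) \<oplus> ((e \<cdot> g) \<cdot> p2)) \<cdot> (i2 \<cdot> p1) = (((g \<cdot> p1) \<oplus> ((e \<cdot> g) \<cdot> p2)) \<cdot> i2) \<cdot> p1"
    using comp_assoc[OF S W S N p1 i2 G] .
  also have "((g \<cdot> p1) \<oplus> ((e \<cdot> g) \<cdot> p2)) \<cdot> i2 = ((g \<cdot> p1) \<cdot> i2) \<oplus> (((e \<cdot> g) \<cdot> p2) \<cdot> i2)"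
    using add_comp[OF W S N i2 a1 a2] .
  also have "(g \<cdot> p1) \<cdot> i2 = zer C W N" using comp_assoc[OF W S W N i2 p1 g] e12
    comp_zer[OF W W N g] by simp
  also have "((e \<cdot> g) \<cdot> p2) \<cdot> i2 = e \<cdot> g"
    using comp_assoc[OF W S W N i2 p2 eg] e22 comp_idt[OF W N eg] by simp
  also have "zer C W N \<oplus> (e \<cdot> g) = e \<cdot> g" using zer_add[OF W N eg] .
  finally show ?thesis using L by simp
qed

lemma cone_out_i1:
  assumes N: "N \<in> Ob C" and e: "e \<in> Hom C N N" and g: "g \<in> Hom C W N"
  shows "((g \<cdot> p1) \<oplus> ((e \<cdot> g) \<cdot> p2)) \<cdot> i1 = g"
proof -
  have eg: "e \<cdot> g \<in> Hom C W N" using comp_closed[OF W N N g e] .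
  have a1: "g \<cdot> p1 \<in> Hom C S N" using comp_closed[OF S W N p1 g] .
  have a2: "(e \<cdot> g) \<cdot> p2 \<in> Hom C S N" using comp_closed[OF S W N p2 eg] .
  have "((g \<cdot> p1) \<oplus> ((e \<cdot> g) \<cdot> p2)) \<cdot> i1 = ((g \<cdot> p1) \<cdot> i1) \<oplus> (((e \<cdot> g) \<cdot> p2) \<cdot> i1)"
    using add_comp[OF W S N i1 a1 a2] .
  also have "(g \<cdot> p1) \<cdot> i1 = g" using comp_assoc[OF W S W N i1 p1 g] e11 comp_idt[OF W N g] by simp
  also have "((e \<cdot> g) \<cdot> p2) \<cdot> i1 = zer C W N"
    using comp_assoc[OF W S W N i1 p2 eg] e21 comp_zer[OF W W N eg] by simp
  finally show ?thesis using add_zer[OF W N g] by simp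
qed

lemma cone_out_natural:
  assumes N: "N \<in> Ob C" and L: "L \<in> Ob C" and e: "e \<in> Hom C N N" and dL: "dL \<in> Hom C L L"
    and g: "g \<in> Hom C W N" and \<phi>: "\<phi> \<in> Hom C N L" and ch: "dL \<cdot> \<phi> = \<phi> \<cdot> e"
  shows "\<phi> \<cdot> ((g \<cdot> p1) \<oplus> ((e \<cdot> g) \<cdot> p2)) = ((\<phi> \<cdot> g) \<cdot> p1) \<oplus> ((dL \<cdot> (\<phi> \<cdot> g)) \<cdot> p2)"
proof -
  have eg: "e \<cdot> g \<in> Hom C W N" using comp_closed[OF W N N g e] .
  have a1: "g \<cdot> p1 \<in> Hom C S N" using comp_closed[OF S W N p1 g] .
  have a2: "(e \<cdot> g) \<cdot> p2 \<in> Hom C S N" using comp_closed[OF S W N p2 eg] .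
  have "\<phi> \<cdot> ((g \<cdot> p1) \<oplus> ((e \<cdot> g) \<cdot> p2)) = (\<phi> \<cdot> (g \<cdot> p1)) \<oplus> (\<phi> \<cdot> ((e \<cdot> g) \<cdot> p2))"
    using comp_add[OF S N L a1 a2 \<phi>] .
  also have "\<phi> \<cdot> (g \<cdot> p1) = (\<phi> \<cdot> g) \<cdot> p1" using comp_assoc[OF S W N L p1 g \<phi>] .
  also have "\<phi> \<cdot> ((e \<cdot> g) \<cdot> p2) = (\<phi> \<cdot> (e \<cdot> g)) \<cdot> p2" using comp_assoc[OF S W N L p2 eg \<phi>] .
  also have "\<phi> \<cdot> (e \<cdot> g) = dL \<cdot> (\<phi> \<cdot> g)"
    using comp_assoc[OF W N N L g e \<phi>] comp_assoc[OF W N L L g \<phi> dL] ch by simp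
  finally show ?thesis .
qed

lemma cone_out_zer:
  assumes N: "N \<in> Ob C" and e: "e \<in> Hom C N N"
  shows "(zer C W N \<cdot> p1) \<oplus> ((e \<cdot> zer C W N) \<cdot> p2) = zer C S N"
  using zer_comp[OF S W N p1] comp_zer[OF W N N e] zer_comp[OF S W N p2]
    add_zer[OF S N zer_closed[OF S N]] by simp

lemma cone_in_closed:
  assumes M: "M \<in> Ob C" and d: "d \<in> Hom C M M" and g: "g \<in> Hom C M W"
  shows "(i1 \<cdot> (g \<cdot> d)) \<oplus> (i2 \<cdot> g) \<in> Hom C M S"
  using add_closed[OF M S comp_closed[OF M W S comp_closed[OF M M W d g] i1]
      comp_closed[OF M W S g i2]] .

lemma cone_in_chain:
  assumes M: "M \<in> Ob C" and d: "d \<in> Hom C M M" and dd: "d \<cdot> d = zer C M M" and g: "g \<in> Hom C M W"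
  shows "(i2 \<cdot> p1) \<cdot> ((i1 \<cdot> (g \<cdot> d)) \<oplus> (i2 \<cdot> g)) = ((i1 \<cdot> (g \<cdot> d)) \<oplus> (i2 \<cdot> g)) \<cdot> d"
proof -
  have gd: "g \<cdot> d \<in> Hom C M W" using comp_closed[OF M M W d g] .
  have a1: "i1 \<cdot> (g \<cdot> d) \<in> Hom C M S" using comp_closed[OF M W S gd i1] .
  have a2: "i2 \<cdot> g \<in> Hom C M S" using comp_closed[OF M W S g i2] .
  have ip: "i2 \<cdot> p1 \<in> Hom C S S" using comp_closed[OF S W S p1 i2] .
  have "(i2 \<cdot> p1) \<cdot> ((i1 \<cdot> (g \<cdot> d)) \<oplus> (i2 \<cdot> g)) = i2 \<cdot> (p1 \<cdot> ((i1 \<cdot> (g \<cdot> d)) \<oplus> (i2 \<cdot> g)))"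
    using comp_assoc[OF M S W S add_closed[OF M S a1 a2] p1 i2] by simp
  also have "p1 \<cdot> ((i1 \<cdot> (g \<cdot> d)) \<oplus> (i2 \<cdot> g)) = (p1 \<cdot> (i1 \<cdot> (g \<cdot> d))) \<oplus> (p1 \<cdot> (i2 \<cdot> g))"
    using comp_add[OF M S W a1 a2 p1] .
  also have "p1 \<cdot> (i1 \<cdot> (g \<cdot> d)) = g \<cdot> d"
    using comp_assoc[OF M W S W gd i1 p1] e11 idt_comp[OF M W gd] by simp
  also have "p1 \<cdot> (i2 \<cdot> g) = zer C M W" using comp_assoc[OF M W S W g i2 p1] e12
    zer_comp[OF M W W g] by simp
  also have "(g \<cdot> d) \<oplus> zer C M W = g \<cdot> d" using add_zer[OF M W gd] .
  finally have L: "(i2 \<cdot> p1) \<cdot> ((i1 \<cdot> (g \<cdot> d)) \<oplus> (i2 \<cdot> g)) = i2 \<cdot> (g \<cdot> d)" .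
  have "((i1 \<cdot> (g \<cdot> d)) \<oplus> (i2 \<cdot> g)) \<cdot> d = ((i1 \<cdot> (g \<cdot> d)) \<cdot> d) \<oplus> ((i2 \<cdot> g) \<cdot> d)"
    using add_comp[OF M M S d a1 a2] .
  also have "(i1 \<cdot> (g \<cdot> d)) \<cdot> d = zer C M S"
    using comp_assoc[OF M M W S d gd i1] comp_assoc[OF M M M W d d g] dd comp_zer[OF M M W g]
      comp_zer[OF M W S i1] by simp
  also have "(i2 \<cdot> g) \<cdot> d = i2 \<cdot> (g \<cdot> d)" using comp_assoc[OF M M W S d g i2] by simp
  also have "zer C M S \<oplus> (i2 \<cdot> (g \<cdot> d)) = i2 \<cdot> (g \<cdot> d)"
    using zer_add[OF M S comp_closed[OF M W S gd i2]] .
  finally show ?thesis using L by simp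
qed

lemma p2_cone_in:
  assumes M: "M \<in> Ob C" and d: "d \<in> Hom C M M" and g: "g \<in> Hom C M W"
  shows "p2 \<cdot> ((i1 \<cdot> (g \<cdot> d)) \<oplus> (i2 \<cdot> g)) = g"
proof -
  have gd: "g \<cdot> d \<in> Hom C M W" using comp_closed[OF M M W d g] .
  have a1: "i1 \<cdot> (g \<cdot> d) \<in> Hom C M S" using comp_closed[OF M W S gd i1] .
  have a2: "i2 \<cdot> g \<in> Hom C M S" using comp_closed[OF M W S g i2] .
  have "p2 \<cdot> ((i1 \<cdot> (g \<cdot> d)) \<oplus> (i2 \<cdot> g)) = (p2 \<cdot> (i1 \<cdot> (g \<cdot> d))) \<oplus> (p2 \<cdot> (i2 \<cdot> g))"
    using comp_add[OF M S W a1 a2 p2] .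
  also have "p2 \<cdot> (i1 \<cdot> (g \<cdot> d)) = zer C M W"
    using comp_assoc[OF M W S W gd i1 p2] e21 zer_comp[OF M W W gd] by simp
  also have "p2 \<cdot> (i2 \<cdot> g) = g" using comp_assoc[OF M W S W g i2 p2] e22 idt_comp[OF M W g] by simp
  finally show ?thesis using zer_add[OF M W g] by simp
qed

lemma cone_in_natural:
  assumes M: "M \<in> Ob C" and L: "L \<in> Ob C" and d: "d \<in> Hom C M M" and dL: "dL \<in> Hom C L L"
    and g: "g \<in> Hom C M W" and \<phi>: "\<phi> \<in> Hom C L M" and ch: "d \<cdot> \<phi> = \<phi> \<cdot> dL"
  shows "((i1 \<cdot> (g \<cdot> d)) \<oplus> (i2 \<cdot> g)) \<cdot> \<phi> = (i1 \<cdot> ((g \<cdot> \<phi>) \<cdot> dL)) \<oplus> (i2 \<cdot> (g \<cdot> \<phi>))"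
proof -
  have gd: "g \<cdot> d \<in> Hom C M W" using comp_closed[OF M M W d g] .
  have a1: "i1 \<cdot> (g \<cdot> d) \<in> Hom C M S" using comp_closed[OF M W S gd i1] .
  have a2: "i2 \<cdot> g \<in> Hom C M S" using comp_closed[OF M W S g i2] .
  have "((i1 \<cdot> (g \<cdot> d)) \<oplus> (i2 \<cdot> g)) \<cdot> \<phi> = ((i1 \<cdot> (g \<cdot> d)) \<cdot> \<phi>) \<oplus> ((i2 \<cdot> g) \<cdot> \<phi>)"
    using add_comp[OF L M S \<phi> a1 a2] .
  also have "(i1 \<cdot> (g \<cdot> d)) \<cdot> \<phi> = i1 \<cdot> ((g \<cdot> d) \<cdot> \<phi>)" using comp_assoc[OF L M W S \<phi> gd i1] by simp
  also have "(g \<cdot> d) \<cdot> \<phi> = (g \<cdot> \<phi>) \<cdot> dL"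
    using comp_assoc[OF L M M W \<phi> d g] comp_assoc[OF L L M W dL \<phi> g] ch by simp
  also have "(i2 \<cdot> g) \<cdot> \<phi> = i2 \<cdot> (g \<cdot> \<phi>)" using comp_assoc[OF L M W S \<phi> g i2] by simp
  finally show ?thesis .
qed

end

end

locale abelian_category =
  fixes C :: "('o, 'a, 'k::field) kcat"
  assumes is_abelian: "is_abelian C"

sublocale abelian_category \<subseteq> klinear_category
  using is_abelian unfolding is_abelian_def by unfold_locales auto

context abelian_category
begin

definition double :: "'o \<Rightarrow> 'o \<times> 'a \<times> 'a \<times> 'a \<times> 'a" where
  "double W = (SOME (S, i1, i2, p1, p2). biproduct_diagram C W W S i1 i2 p1 p2)"

lemma biproduct_exists: "X \<in> Ob C \<Longrightarrow> Y \<in> Ob C \<Longrightarrow> \<exists>S. is_biproduct C X Y S"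
  using is_abelian unfolding is_abelian_def by blast

lemma double:
  assumes "W \<in> Ob C"
  obtains S i1 i2 p1 p2 where "double W = (S, i1, i2, p1, p2)"
    and "biproduct_diagram C W W S i1 i2 p1 p2"
proof -
  have "\<exists>x. case x of (S, i1, i2, p1, p2) \<Rightarrow> biproduct_diagram C W W S i1 i2 p1 p2"
    using biproduct_exists[OF assms assms] unfolding is_biproduct_iff by auto
  then have "case double W of (S, i1, i2, p1, p2) \<Rightarrow> biproduct_diagram C W W S i1 i2 p1 p2"
    unfolding double_def by (rule someI_ex)
  then show ?thesis using that by (auto split: prod.splits)
qed

end

section \<open>Cyclic complexes\<close>

locale cyclic_complexes = abelian_category C for C :: "('o, 'a, 'k::field) kcat" +
  fixes m :: nat
  assumes m_pos: "1 \<le> m"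
begin

abbreviation Cm where "Cm \<equiv> cyc_cat C m"

abbreviation nxt :: "nat \<Rightarrow> nat" where "nxt i \<equiv> Suc i mod m"

lemma nxt_less [simp]: "nxt i < m"
  using m_pos by simp

lemma nxt_eq: "j < m \<Longrightarrow> nxt j = (if Suc j = m then 0 else Suc j)"
  by (simp add: mod_Suc)

lemma nxt_neq: "m \<noteq> 1 \<Longrightarrow> k < m \<Longrightarrow> nxt k \<noteq> k"
  by (simp add: nxt_eq)

lemma nxt_inj: "j < m \<Longrightarrow> k < m \<Longrightarrow> nxt j = nxt k \<Longrightarrow> j = k"
  by (simp add: nxt_eq split: if_splits)

lemma nxt_surj:
  assumes "j < m"
  obtains i where "i < m" and "nxt i = j"
proof (cases j)
  case 0
  with m_pos show ?thesis using that[of "m - 1"] by (simp add: nxt_eq)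
next
  case (Suc i)
  with assms show ?thesis using that[of i] by (simp add: nxt_eq)
qed

lemma Ob_cyc_cat:
  "(M, d) \<in> Ob Cm \<longleftrightarrow> (\<forall>i<m. M i \<in> Ob C \<and> d i \<in> Hom C (M i) (M (nxt i)) \<and>
      d (nxt i) \<cdot> d i = zer C (M i) (M (nxt (nxt i)))) \<and> (\<forall>i\<ge>m. M i = undefined \<and> d i = undefined)"
  by (simp add: cyc_cat_def)

lemma Hom_cyc_cat:
  "f \<in> Hom Cm (M, d) (N, e) \<longleftrightarrow>
     (\<forall>i<m. f i \<in> Hom C (M i) (N i) \<and> e i \<cdot> f i = f (nxt i) \<cdot> d i) \<and> (\<forall>i\<ge>m. f i = undefined)"
  by (simp add: cyc_cat_def)

lemma Ob_cyc_catD: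
  "(M, d) \<in> Ob Cm \<Longrightarrow> i < m \<Longrightarrow>
   M i \<in> Ob C \<and> d i \<in> Hom C (M i) (M (nxt i)) \<and> d (nxt i) \<cdot> d i = zer C (M i) (M (nxt (nxt i)))"
  unfolding Ob_cyc_cat by blast

lemma Hom_cyc_catD:
  "f \<in> Hom Cm (M, d) (N, e) \<Longrightarrow> i < m \<Longrightarrow> f i \<in> Hom C (M i) (N i) \<and> e i \<cdot> f i = f (nxt i) \<cdot> d i"
  unfolding Hom_cyc_cat by blast

lemma cmp_cyc_cat: "cmp Cm g f = (\<lambda>i. if i < m then g i \<cdot> f i else undefined)"
  by (simp add: cyc_cat_def)

lemma idt_cyc_cat: "idt Cm (M, d) = (\<lambda>i. if i < m then idt C (M i) else undefined)"
  by (simp add: cyc_cat_def fun_eq_iff)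

lemma zer_cyc_cat: "zer Cm (M, d) (N, e) = (\<lambda>i. if i < m then zer C (M i) (N i) else undefined)"
  by (simp add: cyc_cat_def fun_eq_iff)

lemma cyc_comp_closed:
  assumes X: "(M, d) \<in> Ob Cm" and Y: "(N, e) \<in> Ob Cm" and Z: "(P, c) \<in> Ob Cm"
    and f: "f \<in> Hom Cm (M, d) (N, e)" and g: "g \<in> Hom Cm (N, e) (P, c)"
  shows "cmp Cm g f \<in> Hom Cm (M, d) (P, c)"
  unfolding Hom_cyc_cat cmp_cyc_cat
proof (intro conjI allI impI)
  fix i assume i: "i < m"
  define j where "j = nxt i"
  have j: "j < m" unfolding j_def by simp
  have O: "M i \<in> Ob C" "N i \<in> Ob C" "P i \<in> Ob C" "M j \<in> Ob C" "N j \<in> Ob C" "P j \<in> Ob C"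
    using X Y Z i j unfolding Ob_cyc_cat by auto
  have H: "f i \<in> Hom C (M i) (N i)" "g i \<in> Hom C (N i) (P i)" "f j \<in> Hom C (M j) (N j)"
    "g j \<in> Hom C (N j) (P j)" "d i \<in> Hom C (M i) (M j)" "e i \<in> Hom C (N i) (N j)"
      "c i \<in> Hom C (P i) (P j)"
    using f g X Y Z i j unfolding Hom_cyc_cat Ob_cyc_cat j_def by auto
  have chain: "e i \<cdot> f i = f j \<cdot> d i" "c i \<cdot> g i = g j \<cdot> e i"
    using f g i unfolding Hom_cyc_cat j_def by auto
  show "(if i < m then g i \<cdot> f i else undefined) \<in> Hom C (M i) (P i)"
    using i comp_closed[OF O(1-3) H(1,2)] by simp
  have "c i \<cdot> (g i \<cdot> f i) = (g j \<cdot> e i) \<cdot> f i"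
    using comp_assoc[OF O(1-3) O(6) H(1,2,7)] chain by simp
  also have "\<dots> = (g j \<cdot> f j) \<cdot> d i"
    using comp_assoc[OF O(1,2,5,6) H(1,6,4)] chain comp_assoc[OF O(1,4,5,6) H(5,3,4)] by simp
  finally show "c i \<cdot> (if i < m then g i \<cdot> f i else undefined) =
      (if nxt i < m then g (nxt i) \<cdot> f (nxt i) else undefined) \<cdot> d i"
    using i unfolding j_def by simp
qed auto

lemma cyc_idt_closed:
  assumes X: "(M, d) \<in> Ob Cm"
  shows "idt Cm (M, d) \<in> Hom Cm (M, d) (M, d)"
  unfolding Hom_cyc_cat idt_cyc_cat
proof (intro conjI allI impI)
  fix i assume i: "i < m"
  have "M i \<in> Ob C" "M (nxt i) \<in> Ob C" "d i \<in> Hom C (M i) (M (nxt i))"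
    using X i unfolding Ob_cyc_cat by auto
  then show "(if i < m then idt C (M i) else undefined) \<in> Hom C (M i) (M i)"
    and "d i \<cdot> (if i < m then idt C (M i) else undefined) =
      (if nxt i < m then idt C (M (nxt i)) else undefined) \<cdot> d i"
    using i idt_closed idt_comp comp_idt by simp_all
qed auto

lemma cyc_comp_assoc:
  assumes "(M0, d0) \<in> Ob Cm" "(M1, d1) \<in> Ob Cm" "(M2, d2) \<in> Ob Cm" "(M3, d3) \<in> Ob Cm"
    and "f \<in> Hom Cm (M0, d0) (M1, d1)" "g \<in> Hom Cm (M1, d1) (M2, d2)" "h \<in> Hom Cm (M2, d2) (M3, d3)"
  shows "cmp Cm h (cmp Cm g f) = cmp Cm (cmp Cm h g) f"
proof -
  have "h i \<cdot> (g i \<cdot> f i) = (h i \<cdot> g i) \<cdot> f i" if "i < m" for i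
    using comp_assoc assms Ob_cyc_catD Hom_cyc_catD that by meson
  then show ?thesis by (simp add: fun_eq_iff cmp_cyc_cat)
qed

lemma cyc_comp_idt:
  assumes "(M, d) \<in> Ob Cm" "(N, e) \<in> Ob Cm" and "f \<in> Hom Cm (M, d) (N, e)"
  shows "cmp Cm f (idt Cm (M, d)) = f" and "cmp Cm (idt Cm (N, e)) f = f"
  using assms
    by (auto simp: fun_eq_iff cmp_cyc_cat idt_cyc_cat Ob_cyc_cat Hom_cyc_cat comp_idt idt_comp)

lemma category_cyc_cat: "is_category Cm"
  unfolding is_category_def Ball_def split_paired_All
  by (auto simp: cyc_idt_closed cyc_comp_closed cyc_comp_assoc cyc_comp_idt)

end

sublocale cyclic_complexes \<subseteq> Cm: category "cyc_cat C m"
  using category_cyc_cat by unfold_locales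

context cyclic_complexes
begin

lemma isomorphic_cyc_catE:
  assumes "isomorphic Cm (M, d) (N, e)"
  obtains \<theta> \<psi> where "\<theta> \<in> Hom Cm (M, d) (N, e)" and "\<psi> \<in> Hom Cm (N, e) (M, d)"
    and "\<And>i. i < m \<Longrightarrow> \<psi> i \<cdot> \<theta> i = idt C (M i) \<and> \<theta> i \<cdot> \<psi> i = idt C (N i)"
proof -
  obtain \<theta> \<psi> where "\<theta> \<in> Hom Cm (M, d) (N, e)" "\<psi> \<in> Hom Cm (N, e) (M, d)"
    and "cmp Cm \<psi> \<theta> = idt Cm (M, d)" "cmp Cm \<theta> \<psi> = idt Cm (N, e)"
    using assms unfolding isomorphic_def by auto
  then show ?thesis
    using that[of \<theta> \<psi>] by (simp add: cmp_cyc_cat idt_cyc_cat fun_eq_iff) metis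
qed

lemma in_CmP_isomorphic:
  assumes iso: "isomorphic Cm X Y" and P: "in_CmP C m X"
  shows "in_CmP C m Y"
proof -
  obtain M d N e where XY: "X = (M, d)" "Y = (N, e)" by (cases X, cases Y) auto
  have Y: "(N, e) \<in> Ob Cm" using iso XY unfolding isomorphic_def by auto
  obtain \<theta> \<psi> where \<theta>: "\<theta> \<in> Hom Cm (M, d) (N, e)" and \<psi>: "\<psi> \<in> Hom Cm (N, e) (M, d)"
    and inv: "\<And>i. i < m \<Longrightarrow> \<psi> i \<cdot> \<theta> i = idt C (M i) \<and> \<theta> i \<cdot> \<psi> i = idt C (N i)"
    using isomorphic_cyc_catE iso XY by metis
  have "is_projective C (N i)" if i: "i < m" for i
    using projective_retract[of "M i" "N i" "\<theta> i" "\<psi> i"] P XY Ob_cyc_catD[OF Y i]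
      Hom_cyc_catD[OF \<theta> i] Hom_cyc_catD[OF \<psi> i] inv[OF i] i by (simp add: in_CmP_def)
  then show ?thesis using Y XY unfolding in_CmP_def by simp
qed

lemma d0_nonzero_isomorphic:
  assumes iso: "isomorphic Cm X Y" and D: "d0_nonzero C m X"
  shows "d0_nonzero C m Y"
proof (rule ccontr)
  obtain M d N e where XY: "X = (M, d)" "Y = (N, e)" by (cases X, cases Y) auto
  have X: "(M, d) \<in> Ob Cm" and Y: "(N, e) \<in> Ob Cm" using iso XY unfolding isomorphic_def by auto
  obtain \<theta> \<psi> where \<theta>: "\<theta> \<in> Hom Cm (M, d) (N, e)" and \<psi>: "\<psi> \<in> Hom Cm (N, e) (M, d)"
    and inv: "\<And>i. i < m \<Longrightarrow> \<psi> i \<cdot> \<theta> i = idt C (M i) \<and> \<theta> i \<cdot> \<psi> i = idt C (N i)"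
    using isomorphic_cyc_catE iso XY by metis
  have m0: "0 < m" using m_pos by simp
  define j where "j = nxt 0"
  have j: "j < m" unfolding j_def by (rule nxt_less)
  have O: "M 0 \<in> Ob C" "N 0 \<in> Ob C" "M j \<in> Ob C" "N j \<in> Ob C"
    using Ob_cyc_catD[OF X m0] Ob_cyc_catD[OF Y m0] Ob_cyc_catD[OF X j] Ob_cyc_catD[OF Y j] by auto
  have H: "\<theta> 0 \<in> Hom C (M 0) (N 0)" "\<psi> 0 \<in> Hom C (N 0) (M 0)" "\<psi> j \<in> Hom C (N j) (M j)"
     "d 0 \<in> Hom C (M 0) (M j)"
    using Hom_cyc_catD[OF \<theta> m0] Hom_cyc_catD[OF \<psi> m0] Hom_cyc_catD[OF \<psi> j] Ob_cyc_catD[OF X m0]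
    unfolding j_def by auto
  have chain: "d 0 \<cdot> \<psi> 0 = \<psi> j \<cdot> e 0" using Hom_cyc_catD[OF \<psi> m0] unfolding j_def by auto
  assume "\<not> d0_nonzero C m Y"
  then have "e 0 = zer C (N 0) (N j)" using XY unfolding d0_nonzero_def j_def by simp
  then have "d 0 = zer C (M 0) (M j)"
    using inv[OF m0] comp_idt[OF O(1,3) H(4)] comp_assoc[OF O(1,2,1,3) H(1,2,4)] chain
      comp_zer[OF O(2,4,3) H(3)] zer_comp[OF O(1,2,3) H(1)] by simp
  then show False using D XY unfolding d0_nonzero_def j_def by simp
qed

section \<open>Disk complexes\<close>

(* disk W j is W --id--> W in degrees j and j+1, zero elsewhere; for m = 1 the two degrees
   coincide and it becomes the cone W + W with differential i2 p1.  Morphisms disk W j -> N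
   correspond to morphisms W -> N_j, and morphisms M -> disk W j to morphisms M_(j+1) -> W,
   so disks detect monomorphisms, epimorphisms and kernels of C_m componentwise. *)

definition disk :: "'o \<Rightarrow> nat \<Rightarrow> (nat \<Rightarrow> 'o) \<times> (nat \<Rightarrow> 'a)" where
  "disk W j = (case double W of (S, i1, i2, p1, p2) \<Rightarrow>
     (\<lambda>k. if k < m then if m = 1 then S else W else undefined,
      \<lambda>k. if k < m then if m = 1 then i2 \<cdot> p1 else if k = j then idt C W else zer C W W
          else undefined))"

definition from_disk :: "'o \<Rightarrow> nat \<Rightarrow> (nat \<Rightarrow> 'o) \<Rightarrow> (nat \<Rightarrow> 'a) \<Rightarrow> 'a \<Rightarrow> nat \<Rightarrow> 'a" where
  "from_disk W j N e g = (case double W of (S, i1, i2, p1, p2) \<Rightarrow> \<lambda>k.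
     if k < m then
       if m = 1 then (g \<cdot> p1) \<oplus> ((e j \<cdot> g) \<cdot> p2)
       else if k = j then g else if k = nxt j then e j \<cdot> g else zer C W (N k)
     else undefined)"

definition disk_restrict :: "'o \<Rightarrow> nat \<Rightarrow> (nat \<Rightarrow> 'a) \<Rightarrow> 'a" where
  "disk_restrict W j V = (case double W of (S, i1, i2, p1, p2) \<Rightarrow> if m = 1 then V j \<cdot> i1 else V j)"

definition to_disk :: "'o \<Rightarrow> nat \<Rightarrow> (nat \<Rightarrow> 'o) \<Rightarrow> (nat \<Rightarrow> 'a) \<Rightarrow> 'a \<Rightarrow> nat \<Rightarrow> 'a" where
  "to_disk W j M d g = (case double W of (S, i1, i2, p1, p2) \<Rightarrow> \<lambda>k.
     if k < m then
       if m = 1 then (i1 \<cdot> (g \<cdot> d j)) \<oplus> (i2 \<cdot> g)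
       else if k = nxt j then g else if k = j then g \<cdot> d j else zer C (M k) W
     else undefined)"

lemma disk_in_Ob:
  assumes W: "W \<in> Ob C"
  shows "disk W j \<in> Ob Cm"
proof -
  obtain S i1 i2 p1 p2 where dbl: "double W = (S, i1, i2, p1, p2)"
    and B: "biproduct_diagram C W W S i1 i2 p1 p2" using double[OF W] .
  have S: "S \<in> Ob C" and "i2 \<cdot> p1 \<in> Hom C S S"
    using B comp_closed[OF _ W] unfolding biproduct_diagram_def by auto
  show ?thesis
  proof (cases "m = 1")
    case True
    with S \<open>i2 \<cdot> p1 \<in> Hom C S S\<close> show ?thesis
      unfolding disk_def dbl prod.case Ob_cyc_cat using cone_diff_square[OF W B] by auto
  next
    case False
    have "(if nxt k = j then idt C W else zer C W W) \<cdot> (if k = j then idt C W else zer C W W) =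
        zer C W W"
      if "k < m" for k
      using nxt_neq[OF False that] idt_closed[OF W] zer_closed[OF W W] zer_comp[OF W W W]
        comp_zer[OF W W W] by auto
    with False W show ?thesis
      unfolding disk_def dbl prod.case Ob_cyc_cat using idt_closed zer_closed by auto
  qed
qed

lemma from_disk_eq_if:
  assumes "m \<noteq> 1" and "k < m"
  shows "from_disk W j N e g k =
    (if k = j then g else if k = nxt j then e j \<cdot> g else zer C W (N k))"
  using assms by (simp add: from_disk_def split: prod.split)

lemma from_disk_component_closed:
  assumes m: "m \<noteq> 1" and N: "(N, e) \<in> Ob Cm" and W: "W \<in> Ob C" and j: "j < m"
    and g: "g \<in> Hom C W (N j)" and k: "k < m"
  shows "from_disk W j N e g k \<in> Hom C W (N k)"
  using from_disk_eq_if[OF m k] g comp_closed[OF W _ _ g] zer_closed[OF W] Ob_cyc_catD[OF N j]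
    Ob_cyc_catD[OF N k] by auto

lemma from_disk_component_chain:
  assumes m: "m \<noteq> 1" and N: "(N, e) \<in> Ob Cm" and W: "W \<in> Ob C" and j: "j < m"
    and g: "g \<in> Hom C W (N j)" and k: "k < m"
  shows "e k \<cdot> from_disk W j N e g k =
    from_disk W j N e g (nxt k) \<cdot> (if k = j then idt C W else zer C W W)"
proof -
  define F where "F = from_disk W j N e g"
  have F: "F k' = (if k' = j then g else if k' = nxt j then e j \<cdot> g else zer C W (N k'))"
    if "k' < m" for k'
    using from_disk_eq_if[OF m that] unfolding F_def .
  have nj: "nxt j \<noteq> j" using nxt_neq[OF m j] .
  have O: "N j \<in> Ob C" "N (nxt j) \<in> Ob C" "N (nxt (nxt j)) \<in> Ob C" "N k \<in> Ob C"
    "N (nxt k) \<in> Ob C" and ej: "e j \<in> Hom C (N j) (N (nxt j))"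
    and ee: "e (nxt j) \<cdot> e j = zer C (N j) (N (nxt (nxt j)))"
    and ek: "e k \<in> Hom C (N k) (N (nxt k))"
    using Ob_cyc_catD[OF N] j k by auto
  show ?thesis
    unfolding F_def[symmetric]
  proof (cases "k = j")
    case True
    then show "e k \<cdot> F k = F (nxt k) \<cdot> (if k = j then idt C W else zer C W W)"
      using F nj j comp_idt[OF W O(2) comp_closed[OF W O(1,2) g ej]] by simp
  next
    case False
    have "e k \<cdot> F k = zer C W (N (nxt k))"
    proof (cases "k = nxt j")
      case True
      then show ?thesis
        using F[OF k] False comp_assoc[OF W O(1,2,3) g ej] Ob_cyc_catD[OF N nxt_less] ee
          zer_comp[OF W O(1,3) g] by auto
    qed (use F[OF k] False comp_zer[OF W O(4,5) ek] in simp)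
    then show "e k \<cdot> F k = F (nxt k) \<cdot> (if k = j then idt C W else zer C W W)"
      using False comp_zer[OF W W O(5) from_disk_component_closed[OF m N W j g nxt_less]]
      unfolding F_def by simp
  qed
qed

lemma from_disk_closed:
  assumes N: "(N, e) \<in> Ob Cm" and W: "W \<in> Ob C" and j: "j < m" and g: "g \<in> Hom C W (N j)"
  shows "from_disk W j N e g \<in> Hom Cm (disk W j) (N, e)"
proof -
  obtain S i1 i2 p1 p2 where dbl: "double W = (S, i1, i2, p1, p2)"
    and B: "biproduct_diagram C W W S i1 i2 p1 p2" using double[OF W] .
  define F where "F = from_disk W j N e g"
  have "F k \<in> Hom C (if m = 1 then S else W) (N k) \<and>
      e k \<cdot> F k = F (nxt k) \<cdot> (if m = 1 then i2 \<cdot> p1 else if k = j then idt C W else zer C W W)"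
    if k: "k < m" for k
  proof (cases "m = 1")
    case True
    then have "k = 0" "j = 0" "nxt 0 = 0" using k j by auto
    moreover have "N 0 \<in> Ob C" "e 0 \<in> Hom C (N 0) (N 0)" "e 0 \<cdot> e 0 = zer C (N 0) (N 0)"
      using Ob_cyc_catD[OF N, of 0] True by auto
    ultimately show ?thesis
      unfolding F_def from_disk_def dbl
      using True g cone_out_closed[OF W B] cone_out_chain[OF W B] by simp
  next
    case False
    then show ?thesis
      using from_disk_component_closed[OF False N W j g k]
        from_disk_component_chain[OF False N W j g k]
      unfolding F_def by simp
  qed
  then show ?thesis
    unfolding disk_def dbl prod.case Hom_cyc_cat F_def by (simp add: from_disk_def dbl)
qed

lemma from_disk_natural:
  assumes N: "(N, e) \<in> Ob Cm" and L: "(L, dL) \<in> Ob Cm" and W: "W \<in> Ob C" and j: "j < m"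
    and g: "g \<in> Hom C W (N j)" and \<phi>: "\<phi> \<in> Hom Cm (N, e) (L, dL)"
  shows "cmp Cm \<phi> (from_disk W j N e g) = from_disk W j L dL (\<phi> j \<cdot> g)"
proof -
  obtain S i1 i2 p1 p2 where dbl: "double W = (S, i1, i2, p1, p2)"
    and B: "biproduct_diagram C W W S i1 i2 p1 p2" using double[OF W] .
  have "\<phi> k \<cdot> from_disk W j N e g k = from_disk W j L dL (\<phi> j \<cdot> g) k" if k: "k < m" for k
  proof (cases "m = 1")
    case True
    then have "k = 0" "j = 0" "nxt 0 = 0" using k j by auto
    moreover have "N 0 \<in> Ob C" "e 0 \<in> Hom C (N 0) (N 0)" "L 0 \<in> Ob C" "dL 0 \<in> Hom C (L 0) (L 0)"
      using Ob_cyc_catD[OF N, of 0] Ob_cyc_catD[OF L, of 0] True by auto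
    moreover have "\<phi> 0 \<in> Hom C (N 0) (L 0)" "dL 0 \<cdot> \<phi> 0 = \<phi> 0 \<cdot> e 0"
      using Hom_cyc_catD[OF \<phi>, of 0] True by auto
    ultimately show ?thesis
      unfolding from_disk_def dbl using True g cone_out_natural[OF W B] by simp
  next
    case False
    have O: "N j \<in> Ob C" "N (nxt j) \<in> Ob C" "L j \<in> Ob C" "L (nxt j) \<in> Ob C" "N k \<in> Ob C"
      "L k \<in> Ob C"
      using Ob_cyc_catD[OF N] Ob_cyc_catD[OF L] j k by auto
    have H: "e j \<in> Hom C (N j) (N (nxt j))" "dL j \<in> Hom C (L j) (L (nxt j))"
      "\<phi> j \<in> Hom C (N j) (L j)" "\<phi> (nxt j) \<in> Hom C (N (nxt j)) (L (nxt j))"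
        "\<phi> k \<in> Hom C (N k) (L k)"
      using Ob_cyc_catD[OF N j] Ob_cyc_catD[OF L j] Hom_cyc_catD[OF \<phi>] j k by auto
    have "\<phi> (nxt j) \<cdot> (e j \<cdot> g) = dL j \<cdot> (\<phi> j \<cdot> g)"
      using comp_assoc[OF W O(1,2,4) g H(1,4)] comp_assoc[OF W O(1,3,4) g H(3,2)]
        Hom_cyc_catD[OF \<phi> j] by simp
    then show ?thesis
      unfolding from_disk_def dbl using False k comp_zer[OF W O(5,6) H(5)] by simp
  qed
  then show ?thesis unfolding cmp_cyc_cat by (auto simp: fun_eq_iff from_disk_def dbl)
qed

lemma from_disk_zer:
  assumes N: "(N, e) \<in> Ob Cm" and W: "W \<in> Ob C" and j: "j < m"
  shows "from_disk W j N e (zer C W (N j)) = zer Cm (disk W j) (N, e)"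
proof -
  obtain S i1 i2 p1 p2 where dbl: "double W = (S, i1, i2, p1, p2)"
    and B: "biproduct_diagram C W W S i1 i2 p1 p2" using double[OF W] .
  have "from_disk W j N e (zer C W (N j)) k = zer C (if m = 1 then S else W) (N k)" if k: "k < m"
    for k
  proof (cases "m = 1")
    case True
    then have "k = 0" "j = 0" using k j by auto
    moreover have "N 0 \<in> Ob C" "e 0 \<in> Hom C (N 0) (N 0)" using Ob_cyc_catD[OF N, of 0] True by auto
    ultimately show ?thesis
      unfolding from_disk_def dbl using True cone_out_zer[OF W B] by simp
  next
    case False
    have "e j \<cdot> zer C W (N j) = zer C W (N (nxt j))"
      using comp_zer[OF W] Ob_cyc_catD[OF N j] Ob_cyc_catD[OF N nxt_less] by blast
    then show ?thesis unfolding from_disk_def dbl using False k by auto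
  qed
  moreover have "from_disk W j N e (zer C W (N j)) k = undefined" if "\<not> k < m" for k
    using that by (simp add: from_disk_def dbl)
  ultimately show ?thesis
    unfolding disk_def dbl prod.case zer_cyc_cat by (auto simp: fun_eq_iff)
qed

lemma disk_restrict_from_disk:
  assumes N: "(N, e) \<in> Ob Cm" and W: "W \<in> Ob C" and j: "j < m" and g: "g \<in> Hom C W (N j)"
  shows "disk_restrict W j (from_disk W j N e g) = g"
proof -
  obtain S i1 i2 p1 p2 where dbl: "double W = (S, i1, i2, p1, p2)"
    and B: "biproduct_diagram C W W S i1 i2 p1 p2" using double[OF W] .
  show ?thesis
  proof (cases "m = 1")
    case True
    then have "j = 0" using j by simp
    moreover have "N 0 \<in> Ob C" "e 0 \<in> Hom C (N 0) (N 0)" using Ob_cyc_catD[OF N, of 0] True by auto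
    ultimately show ?thesis
      unfolding from_disk_def disk_restrict_def dbl using True g cone_out_i1[OF W B] by simp
  qed (use j in \<open>simp add: from_disk_def disk_restrict_def dbl\<close>)
qed

lemma disk_restrict:
  assumes N: "(N, e) \<in> Ob Cm" and L: "(L, dL) \<in> Ob Cm" and W: "W \<in> Ob C" and j: "j < m"
    and V: "V \<in> Hom Cm (disk W j) (N, e)" and \<phi>: "\<phi> \<in> Hom Cm (N, e) (L, dL)"
  shows "disk_restrict W j V \<in> Hom C W (N j)"
    and "disk_restrict W j (cmp Cm \<phi> V) = \<phi> j \<cdot> disk_restrict W j V"
proof -
  obtain S i1 i2 p1 p2 where dbl: "double W = (S, i1, i2, p1, p2)"
    and B: "biproduct_diagram C W W S i1 i2 p1 p2" using double[OF W] .
  have S: "S \<in> Ob C" and i1: "i1 \<in> Hom C W S" using B unfolding biproduct_diagram_def by auto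
  have Vj: "V j \<in> Hom C (if m = 1 then S else W) (N j)"
    using V j unfolding disk_def dbl prod.case Hom_cyc_cat by auto
  have O: "N j \<in> Ob C" "L j \<in> Ob C" using Ob_cyc_catD[OF N j] Ob_cyc_catD[OF L j] by auto
  have \<phi>j: "\<phi> j \<in> Hom C (N j) (L j)" using Hom_cyc_catD[OF \<phi> j] by auto
  show "disk_restrict W j V \<in> Hom C W (N j)"
    using Vj comp_closed[OF W S O(1) i1] unfolding disk_restrict_def dbl by auto
  show "disk_restrict W j (cmp Cm \<phi> V) = \<phi> j \<cdot> disk_restrict W j V"
    using Vj comp_assoc[OF W S O i1 _ \<phi>j] j unfolding disk_restrict_def dbl cmp_cyc_cat by auto
qed

lemma to_disk_eq_if:
  assumes "m \<noteq> 1" and "k < m"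
  shows "to_disk W j M d g k = (if k = nxt j then g else if k = j then g \<cdot> d j else zer C (M k) W)"
  using assms by (simp add: to_disk_def split: prod.split)

lemma to_disk_component_closed:
  assumes m: "m \<noteq> 1" and M: "(M, d) \<in> Ob Cm" and W: "W \<in> Ob C" and j: "j < m"
    and g: "g \<in> Hom C (M (nxt j)) W" and k: "k < m"
  shows "to_disk W j M d g k \<in> Hom C (M k) W"
proof -
  have "M j \<in> Ob C" "M (nxt j) \<in> Ob C" "M k \<in> Ob C" "d j \<in> Hom C (M j) (M (nxt j))"
    using Ob_cyc_catD[OF M] j k by auto
  then show ?thesis
    using to_disk_eq_if[OF m k] g comp_closed[of "M j" "M (nxt j)" W "d j" g] zer_closed[OF _ W] W
    by auto
qed

lemma to_disk_component_chain:
  assumes m: "m \<noteq> 1" and M: "(M, d) \<in> Ob Cm" and W: "W \<in> Ob C" and j: "j < m"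
    and g: "g \<in> Hom C (M (nxt j)) W" and k: "k < m"
  shows "(if k = j then idt C W else zer C W W) \<cdot> to_disk W j M d g k =
    to_disk W j M d g (nxt k) \<cdot> d k"
proof -
  define T where "T = to_disk W j M d g"
  have T: "T k' = (if k' = nxt j then g else if k' = j then g \<cdot> d j else zer C (M k') W)"
    if "k' < m" for k'
    using to_disk_eq_if[OF m that] unfolding T_def .
  have nj: "nxt j \<noteq> j" using nxt_neq[OF m j] .
  have O: "M j \<in> Ob C" "M (nxt j) \<in> Ob C" "M k \<in> Ob C" "M (nxt k) \<in> Ob C"
    and dj: "d j \<in> Hom C (M j) (M (nxt j))" and dk: "d k \<in> Hom C (M k) (M (nxt k))"
    using Ob_cyc_catD[OF M] j k by auto
  show ?thesis
    unfolding T_def[symmetric]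
  proof (cases "k = j")
    case True
    then show "(if k = j then idt C W else zer C W W) \<cdot> T k = T (nxt k) \<cdot> d k"
      using T nj j idt_comp[OF O(1) W comp_closed[OF O(1,2) W dj g]] by simp
  next
    case False
    have "T (nxt k) \<cdot> d k = zer C (M k) W"
    proof (cases "nxt k = j")
      case True
      have "d j \<cdot> d k = zer C (M k) (M (nxt j))"
        using Ob_cyc_catD[OF M k] True by simp
      then have "(g \<cdot> d j) \<cdot> d k = zer C (M k) W"
        using comp_assoc[OF O(3,1,2) W dk[unfolded True] dj g] comp_zer[OF O(3,2) W g] by simp
      then show ?thesis using T[OF j] nj True by simp
    next
      case False
      then have "nxt k \<noteq> nxt j" using nxt_inj[OF k j] \<open>k \<noteq> j\<close> by blast
      then show ?thesis using T[OF nxt_less] False zer_comp[OF O(3,4) W dk] by simp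
    qed
    then show "(if k = j then idt C W else zer C W W) \<cdot> T k = T (nxt k) \<cdot> d k"
      using False zer_comp[OF O(3) W W to_disk_component_closed[OF m M W j g k]]
      unfolding T_def by simp
  qed
qed

lemma to_disk_closed:
  assumes M: "(M, d) \<in> Ob Cm" and W: "W \<in> Ob C" and j: "j < m" and g: "g \<in> Hom C (M (nxt j)) W"
  shows "to_disk W j M d g \<in> Hom Cm (M, d) (disk W j)"
proof -
  obtain S i1 i2 p1 p2 where dbl: "double W = (S, i1, i2, p1, p2)"
    and B: "biproduct_diagram C W W S i1 i2 p1 p2" using double[OF W] .
  define T where "T = to_disk W j M d g"
  have "T k \<in> Hom C (M k) (if m = 1 then S else W) \<and>
      (if m = 1 then i2 \<cdot> p1 else if k = j then idt C W else zer C W W) \<cdot> T k = T (nxt k) \<cdot> d k"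
    if k: "k < m" for k
  proof (cases "m = 1")
    case True
    then have "k = 0" "j = 0" "nxt 0 = 0" using k j by auto
    moreover have "M 0 \<in> Ob C" "d 0 \<in> Hom C (M 0) (M 0)" "d 0 \<cdot> d 0 = zer C (M 0) (M 0)"
      using Ob_cyc_catD[OF M, of 0] True by auto
    ultimately show ?thesis
      unfolding T_def to_disk_def dbl
      using True g cone_in_closed[OF W B] cone_in_chain[OF W B] by simp
  next
    case False
    then show ?thesis
      using to_disk_component_closed[OF False M W j g k] to_disk_component_chain[OF False M W j g k]
      unfolding T_def by simp
  qed
  moreover have "T k = undefined" if "\<not> k < m" for k
    using that by (simp add: T_def to_disk_def dbl)
  ultimately show ?thesis
    unfolding disk_def dbl prod.case Hom_cyc_cat T_def by auto
qed

lemma to_disk_natural: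
  assumes M: "(M, d) \<in> Ob Cm" and L: "(L, dL) \<in> Ob Cm" and W: "W \<in> Ob C" and j: "j < m"
    and g: "g \<in> Hom C (M (nxt j)) W" and \<phi>: "\<phi> \<in> Hom Cm (L, dL) (M, d)"
  shows "cmp Cm (to_disk W j M d g) \<phi> = to_disk W j L dL (g \<cdot> \<phi> (nxt j))"
proof -
  obtain S i1 i2 p1 p2 where dbl: "double W = (S, i1, i2, p1, p2)"
    and B: "biproduct_diagram C W W S i1 i2 p1 p2" using double[OF W] .
  have "to_disk W j M d g k \<cdot> \<phi> k = to_disk W j L dL (g \<cdot> \<phi> (nxt j)) k" if k: "k < m" for k
  proof (cases "m = 1")
    case True
    then have "k = 0" "j = 0" "nxt 0 = 0" using k j by auto
    moreover have "M 0 \<in> Ob C" "d 0 \<in> Hom C (M 0) (M 0)" "L 0 \<in> Ob C" "dL 0 \<in> Hom C (L 0) (L 0)"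
      using Ob_cyc_catD[OF M, of 0] Ob_cyc_catD[OF L, of 0] True by auto
    moreover have "\<phi> 0 \<in> Hom C (L 0) (M 0)" "d 0 \<cdot> \<phi> 0 = \<phi> 0 \<cdot> dL 0"
      using Hom_cyc_catD[OF \<phi>, of 0] True by auto
    ultimately show ?thesis
      unfolding to_disk_def dbl using True g cone_in_natural[OF W B] by simp
  next
    case False
    have O: "M j \<in> Ob C" "M (nxt j) \<in> Ob C" "L j \<in> Ob C" "L (nxt j) \<in> Ob C" "M k \<in> Ob C"
      "L k \<in> Ob C"
      using Ob_cyc_catD[OF M] Ob_cyc_catD[OF L] j k by auto
    have H: "d j \<in> Hom C (M j) (M (nxt j))" "dL j \<in> Hom C (L j) (L (nxt j))"
      "\<phi> j \<in> Hom C (L j) (M j)" "\<phi> (nxt j) \<in> Hom C (L (nxt j)) (M (nxt j))"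
        "\<phi> k \<in> Hom C (L k) (M k)"
      using Ob_cyc_catD[OF M j] Ob_cyc_catD[OF L j] Hom_cyc_catD[OF \<phi>] j k by auto
    have "(g \<cdot> d j) \<cdot> \<phi> j = (g \<cdot> \<phi> (nxt j)) \<cdot> dL j"
      using comp_assoc[OF O(3,1,2) W H(3,1) g] comp_assoc[OF O(3,4,2) W H(2,4) g]
        Hom_cyc_catD[OF \<phi> j] by simp
    then show ?thesis
      unfolding to_disk_def dbl using False k zer_comp[OF O(6,5) W H(5)] by simp
  qed
  moreover have "to_disk W j L dL (g \<cdot> \<phi> (nxt j)) k = undefined" if "\<not> k < m" for k
    using that by (simp add: to_disk_def dbl)
  ultimately show ?thesis unfolding cmp_cyc_cat by (auto simp: fun_eq_iff)
qed

lemma to_disk_inject: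
  assumes M: "(M, d) \<in> Ob Cm" and W: "W \<in> Ob C" and j: "j < m"
    and g: "g \<in> Hom C (M (nxt j)) W" and h: "h \<in> Hom C (M (nxt j)) W"
    and eq: "to_disk W j M d g = to_disk W j M d h"
  shows "g = h"
proof -
  obtain S i1 i2 p1 p2 where dbl: "double W = (S, i1, i2, p1, p2)"
    and B: "biproduct_diagram C W W S i1 i2 p1 p2" using double[OF W] .
  have eq_j: "to_disk W j M d g (nxt j) = to_disk W j M d h (nxt j)" using eq by simp
  show ?thesis
  proof (cases "m = 1")
    case True
    then have j0: "j = 0" "nxt 0 = 0" using j by auto
    have M0: "M 0 \<in> Ob C" and d0: "d 0 \<in> Hom C (M 0) (M 0)"
      using Ob_cyc_catD[OF M, of 0] True by auto
    have "(i1 \<cdot> (g \<cdot> d 0)) \<oplus> (i2 \<cdot> g) = (i1 \<cdot> (h \<cdot> d 0)) \<oplus> (i2 \<cdot> h)"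
      using eq_j True j0 unfolding to_disk_def dbl by simp
    then have "p2 \<cdot> ((i1 \<cdot> (g \<cdot> d 0)) \<oplus> (i2 \<cdot> g)) = p2 \<cdot> ((i1 \<cdot> (h \<cdot> d 0)) \<oplus> (i2 \<cdot> h))"
      by simp
    then show ?thesis
      using p2_cone_in[OF W B M0 d0] g h j0 by simp
  qed (use eq_j in \<open>simp add: to_disk_def dbl\<close>)
qed

lemma mono_componentwise:
  assumes N: "(N, e) \<in> Ob Cm" and L: "(L, dL) \<in> Ob Cm" and mono: "is_mono Cm (N, e) (L, dL) i"
    and j: "j < m"
  shows "is_mono C (N j) (L j) (i j)"
  unfolding is_mono_def
proof (intro conjI ballI impI)
  have i: "i \<in> Hom Cm (N, e) (L, dL)" using mono unfolding is_mono_def by simp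
  then show "i j \<in> Hom C (N j) (L j)" using Hom_cyc_catD[OF _ j] by blast
  fix W g h assume W: "W \<in> Ob C" and g: "g \<in> Hom C W (N j)" and h: "h \<in> Hom C W (N j)"
    and eq: "i j \<cdot> g = i j \<cdot> h"
  have "cmp Cm i (from_disk W j N e g) = cmp Cm i (from_disk W j N e h)"
    using from_disk_natural[OF N L W j g i] from_disk_natural[OF N L W j h i] eq by simp
  then have "from_disk W j N e g = from_disk W j N e h"
    using mono disk_in_Ob[OF W] from_disk_closed[OF N W j g] from_disk_closed[OF N W j h]
    unfolding is_mono_def by blast
  then show "g = h"
    using disk_restrict_from_disk[OF N W j g] disk_restrict_from_disk[OF N W j h] by metis
qed

lemma epi_componentwise:
  assumes L: "(L, dL) \<in> Ob Cm" and M: "(M, d) \<in> Ob Cm" and epi: "is_epi Cm (L, dL) (M, d) p"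
    and j: "j < m"
  shows "is_epi C (L j) (M j) (p j)"
  unfolding is_epi_def
proof (intro conjI ballI impI)
  have p: "p \<in> Hom Cm (L, dL) (M, d)" using epi unfolding is_epi_def by simp
  then show "p j \<in> Hom C (L j) (M j)" using Hom_cyc_catD[OF _ j] by blast
  obtain j' where j': "j' < m" and j'j: "nxt j' = j" using nxt_surj[OF j] .
  fix W g h assume W: "W \<in> Ob C" and g: "g \<in> Hom C (M j) W" and h: "h \<in> Hom C (M j) W"
    and eq: "g \<cdot> p j = h \<cdot> p j"
  note g' = g[folded j'j] and h' = h[folded j'j]
  have "cmp Cm (to_disk W j' M d g) p = cmp Cm (to_disk W j' M d h) p"
    using to_disk_natural[OF M L W j' g' p] to_disk_natural[OF M L W j' h' p] eq j'j by simp
  then have "to_disk W j' M d g = to_disk W j' M d h"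
    using epi disk_in_Ob[OF W] to_disk_closed[OF M W j' g'] to_disk_closed[OF M W j' h']
    unfolding is_epi_def by blast
  then show "g = h" using to_disk_inject[OF M W j' g' h'] by blast
qed

lemma kernel_componentwise:
  assumes L: "(L, dL) \<in> Ob Cm" and M: "(M, d) \<in> Ob Cm" and N: "(N, e) \<in> Ob Cm"
    and ker: "is_kernel Cm (L, dL) (M, d) p (N, e) i" and p: "p \<in> Hom Cm (L, dL) (M, d)"
    and W: "W \<in> Ob C" and j: "j < m" and u: "u \<in> Hom C W (L j)" and pu: "p j \<cdot> u = zer C W (M j)"
  shows "\<exists>v\<in>Hom C W (N j). i j \<cdot> v = u"
proof -
  have i: "i \<in> Hom Cm (N, e) (L, dL)" using ker unfolding is_kernel_def by simp
  have "cmp Cm p (from_disk W j L dL u) = zer Cm (disk W j) (M, d)"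
    using from_disk_natural[OF L M W j u p] pu from_disk_zer[OF M W j] by simp
  then obtain V where V: "V \<in> Hom Cm (disk W j) (N, e)" and iV: "cmp Cm i V = from_disk W j L dL u"
    using ker disk_in_Ob[OF W] from_disk_closed[OF L W j u] unfolding is_kernel_def by blast
  have "i j \<cdot> disk_restrict W j V = u"
    using disk_restrict(2)[OF N L W j V i] iV disk_restrict_from_disk[OF L W j u] by simp
  then show ?thesis using disk_restrict(1)[OF N L W j V i] by blast
qed

definition transported_diff :: "(nat \<Rightarrow> 'a) \<Rightarrow> (nat \<Rightarrow> 'a) \<Rightarrow> (nat \<Rightarrow> 'a) \<Rightarrow> nat \<Rightarrow> 'a" where
  "transported_diff \<theta> \<psi> d = (\<lambda>j. if j < m then (\<theta> (nxt j) \<cdot> d j) \<cdot> \<psi> j else undefined)"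

context
  fixes L dL B \<theta> \<psi>
  assumes L: "(L, dL) \<in> Ob Cm" and B: "\<And>j. j < m \<Longrightarrow> B j \<in> Ob C"
    and B_undefined: "\<And>j. m \<le> j \<Longrightarrow> B j = undefined"
    and \<theta>: "\<And>j. j < m \<Longrightarrow> \<theta> j \<in> Hom C (L j) (B j)" and \<psi>: "\<And>j. j < m \<Longrightarrow> \<psi> j \<in> Hom C (B j) (L j)"
    and \<psi>\<theta>: "\<And>j. j < m \<Longrightarrow> \<psi> j \<cdot> \<theta> j = idt C (L j)"
    and \<theta>\<psi>: "\<And>j. j < m \<Longrightarrow> \<theta> j \<cdot> \<psi> j = idt C (B j)"
begin

private lemma
  shows L_Ob: "j < m \<Longrightarrow> L j \<in> Ob C" and dL: "j < m \<Longrightarrow> dL j \<in> Hom C (L j) (L (nxt j))"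
    and dL_square: "j < m \<Longrightarrow> dL (nxt j) \<cdot> dL j = zer C (L j) (L (nxt (nxt j)))"
  using Ob_cyc_catD[OF L] by auto

lemma transported_in_Ob: "(B, transported_diff \<theta> \<psi> dL) \<in> Ob Cm"
  unfolding Ob_cyc_cat
proof (intro conjI allI impI)
  fix j assume j: "j < m"
  define s where "s = nxt j"
  define t where "t = nxt s"
  have s: "s < m" and t: "t < m" unfolding s_def t_def by simp_all
  have d': "(\<theta> s \<cdot> dL j) \<cdot> \<psi> j \<in> Hom C (B j) (B s)"
    using comp_closed[OF B[OF j] L_Ob[OF j] B[OF s] \<psi>[OF j]
        comp_closed[OF L_Ob[OF j] L_Ob[OF s] B[OF s]]]
      dL[OF j] \<theta>[OF s] unfolding s_def by simp
  then show "B j \<in> Ob C" "transported_diff \<theta> \<psi> dL j \<in> Hom C (B j) (B (nxt j))"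
    using B j unfolding transported_diff_def s_def by simp_all
  have "((\<theta> t \<cdot> dL s) \<cdot> \<psi> s) \<cdot> ((\<theta> s \<cdot> dL j) \<cdot> \<psi> j) = (\<theta> t \<cdot> (dL s \<cdot> dL j)) \<cdot> \<psi> j"
    using conjugate_comp[OF L_Ob[OF j] L_Ob[OF s] L_Ob[OF t] B[OF j] B[OF s] B[OF t]
        \<psi>[OF j] _ \<theta>[OF s] \<psi>[OF s] _ \<theta>[OF t] \<psi>\<theta>[OF s]] dL[OF j] dL[OF s]
    unfolding s_def t_def by simp
  also have "\<dots> = zer C (B j) (B t)"
    using dL_square[OF j] comp_zer[OF L_Ob[OF j] L_Ob[OF t] B[OF t] \<theta>[OF t]]
      zer_comp[OF B[OF j] L_Ob[OF j] B[OF t] \<psi>[OF j]] unfolding s_def t_def by simp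
  finally show "transported_diff \<theta> \<psi> dL (nxt j) \<cdot> transported_diff \<theta> \<psi> dL j =
      zer C (B j) (B (nxt (nxt j)))"
    using j unfolding transported_diff_def s_def t_def by simp
next
  fix j assume "m \<le> j"
  then show "B j = undefined" "transported_diff \<theta> \<psi> dL j = undefined"
    using B_undefined unfolding transported_diff_def by auto
qed

lemma transported_isomorphic: "isomorphic Cm (L, dL) (B, transported_diff \<theta> \<psi> dL)"
proof -
  define d' where "d' = transported_diff \<theta> \<psi> dL"
  define \<Theta> where "\<Theta> = (\<lambda>j. if j < m then \<theta> j else undefined)"
  define \<Psi> where "\<Psi> = (\<lambda>j. if j < m then \<psi> j else undefined)"
  have \<Theta>_Hom: "\<Theta> \<in> Hom Cm (L, dL) (B, d')"
    unfolding Hom_cyc_cat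
  proof (intro conjI allI impI)
    fix j assume j: "j < m"
    have s: "nxt j < m" by simp
    have "d' j \<cdot> \<theta> j = (\<theta> (nxt j) \<cdot> dL j) \<cdot> (\<psi> j \<cdot> \<theta> j)"
      using comp_assoc[OF L_Ob[OF j] B[OF j] L_Ob[OF j] B[OF s] \<theta>[OF j] \<psi>[OF j]
          comp_closed[OF L_Ob[OF j] L_Ob[OF s] B[OF s] dL[OF j] \<theta>[OF s]]] j
      unfolding d'_def transported_diff_def by simp
    also have "\<dots> = \<theta> (nxt j) \<cdot> dL j"
      using \<psi>\<theta>[OF j]
        comp_idt[OF L_Ob[OF j] B[OF s]
          comp_closed[OF L_Ob[OF j] L_Ob[OF s] B[OF s] dL[OF j] \<theta>[OF s]]]
      by simp
    finally show "d' j \<cdot> \<Theta> j = \<Theta> (nxt j) \<cdot> dL j" unfolding \<Theta>_def using j by simp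
  qed (use \<theta> in \<open>simp_all add: \<Theta>_def\<close>)
  have \<Psi>_Hom: "\<Psi> \<in> Hom Cm (B, d') (L, dL)"
    unfolding Hom_cyc_cat
  proof (intro conjI allI impI)
    fix j assume j: "j < m"
    have s: "nxt j < m" by simp
    have "\<psi> (nxt j) \<cdot> d' j = (\<psi> (nxt j) \<cdot> (\<theta> (nxt j) \<cdot> dL j)) \<cdot> \<psi> j"
      using comp_assoc[OF B[OF j] L_Ob[OF j] B[OF s] L_Ob[OF s] \<psi>[OF j]
          comp_closed[OF L_Ob[OF j] L_Ob[OF s] B[OF s] dL[OF j] \<theta>[OF s]] \<psi>[OF s]] j
      unfolding d'_def transported_diff_def by simp
    also have "\<psi> (nxt j) \<cdot> (\<theta> (nxt j) \<cdot> dL j) = dL j"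
      using comp_assoc[OF L_Ob[OF j] L_Ob[OF s] B[OF s] L_Ob[OF s] dL[OF j] \<theta>[OF s] \<psi>[OF s]]
        \<psi>\<theta>[OF s] idt_comp[OF L_Ob[OF j] L_Ob[OF s] dL[OF j]] by simp
    finally show "dL j \<cdot> \<Psi> j = \<Psi> (nxt j) \<cdot> d' j" unfolding \<Psi>_def using j by simp
  qed (use \<psi> in \<open>simp_all add: \<Psi>_def\<close>)
  have "cmp Cm \<Psi> \<Theta> = idt Cm (L, dL)" and "cmp Cm \<Theta> \<Psi> = idt Cm (B, d')"
    unfolding cmp_cyc_cat idt_cyc_cat \<Theta>_def \<Psi>_def using \<psi>\<theta> \<theta>\<psi> by (auto simp: fun_eq_iff)
  then show ?thesis
    unfolding isomorphic_def d'_def[symmetric] using L transported_in_Ob \<Theta>_Hom \<Psi>_Hom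
    unfolding d'_def by blast
qed

end

lemma finite_classes_with_components:
  assumes fin: "\<forall>X\<in>Ob C. \<forall>Y\<in>Ob C. finite (Hom C X Y)"
    and B: "\<And>j. j < m \<Longrightarrow> B j \<in> Ob C" and B_undefined: "\<And>j. m \<le> j \<Longrightarrow> B j = undefined"
  shows "finite {isocls Cm X | X. X \<in> Ob Cm \<and> (\<forall>j<m. isomorphic C (fst X j) (B j))}"
proof (rule finite_subset)
  show "finite ((\<lambda>d. isocls Cm (B, d)) ` (PiE {..<m} (\<lambda>j. Hom C (B j) (B (nxt j)))))"
    using fin B by (intro finite_imageI finite_PiE) auto
  show "{isocls Cm X | X. X \<in> Ob Cm \<and> (\<forall>j<m. isomorphic C (fst X j) (B j))}
    \<subseteq> (\<lambda>d. isocls Cm (B, d)) ` (PiE {..<m} (\<lambda>j. Hom C (B j) (B (nxt j))))"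
  proof
    fix c assume "c \<in> {isocls Cm X | X. X \<in> Ob Cm \<and> (\<forall>j<m. isomorphic C (fst X j) (B j))}"
    then obtain L dL where L: "(L, dL) \<in> Ob Cm" and iso: "\<forall>j<m. isomorphic C (L j) (B j)"
      and c: "c = isocls Cm (L, dL)" by auto
    have "\<forall>j\<in>{..<m}. \<exists>\<theta>\<psi>. fst \<theta>\<psi> \<in> Hom C (L j) (B j) \<and> snd \<theta>\<psi> \<in> Hom C (B j) (L j) \<and>
       snd \<theta>\<psi> \<cdot> fst \<theta>\<psi> = idt C (L j) \<and> fst \<theta>\<psi> \<cdot> snd \<theta>\<psi> = idt C (B j)"
      using iso unfolding isomorphic_def by fastforce
    then obtain \<theta>\<psi> where \<theta>\<psi>: "\<forall>j\<in>{..<m}. fst (\<theta>\<psi> j) \<in> Hom C (L j) (B j) \<and>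
       snd (\<theta>\<psi> j) \<in> Hom C (B j) (L j) \<and>
       snd (\<theta>\<psi> j) \<cdot> fst (\<theta>\<psi> j) = idt C (L j) \<and> fst (\<theta>\<psi> j) \<cdot> snd (\<theta>\<psi> j) = idt C (B j)"
      by (rule bchoice[elim_format]) blast
    define d' where "d' = transported_diff (fst \<circ> \<theta>\<psi>) (snd \<circ> \<theta>\<psi>) dL"
    have "(B, d') \<in> Ob Cm" and "isomorphic Cm (L, dL) (B, d')"
      unfolding d'_def using transported_in_Ob[OF L B B_undefined]
        transported_isomorphic[OF L B B_undefined]
        \<theta>\<psi> by auto
    then have "d' \<in> PiE {..<m} (\<lambda>j. Hom C (B j) (B (nxt j)))" and "c = isocls Cm (B, d')"
      using Ob_cyc_catD[of B d'] c Cm.isocls_eq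
      unfolding PiE_iff extensional_def d'_def transported_diff_def by auto
    then show "c \<in> (\<lambda>d. isocls Cm (B, d)) ` (PiE {..<m} (\<lambda>j. Hom C (B j) (B (nxt j))))" by blast
  qed
qed

section \<open>Extensions in C_m(P)\<close>

lemma ses_Ob_Hom:
  assumes "is_ses Cm (N, e) (L, dL) (M, dM) i p"
  shows "(N, e) \<in> Ob Cm" "(L, dL) \<in> Ob Cm" "(M, dM) \<in> Ob Cm"
    and "i \<in> Hom Cm (N, e) (L, dL)" "p \<in> Hom Cm (L, dL) (M, dM)"
  using assms unfolding is_ses_def is_mono_def is_epi_def by auto

lemma ses_split_componentwise:
  assumes ses: "is_ses Cm (N, e) (L, dL) (M, dM) i p" and proj: "is_projective C (M j)"
    and j: "j < m"
  shows "is_biproduct C (N j) (M j) (L j)"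
proof -
  note Ob = ses_Ob_Hom(1-3)[OF ses] and iH = ses_Ob_Hom(4)[OF ses] and pH = ses_Ob_Hom(5)[OF ses]
  have ker: "is_kernel Cm (L, dL) (M, dM) p (N, e) i" using ses unfolding is_ses_def by simp
  have O: "N j \<in> Ob C" "L j \<in> Ob C" "M j \<in> Ob C"
    using Ob_cyc_catD[OF Ob(1) j] Ob_cyc_catD[OF Ob(2) j] Ob_cyc_catD[OF Ob(3) j] by auto
  have "is_epi C (L j) (M j) (p j)"
    using epi_componentwise[OF Ob(2,3) _ j] ses unfolding is_ses_def by blast
  then obtain s where s: "s \<in> Hom C (M j) (L j)" and ps: "p j \<cdot> s = idt C (M j)"
    using projective_epi_splits[OF proj O(2)] by blast
  have "cmp Cm p i j = zer Cm (N, e) (M, dM) j" using ker unfolding is_kernel_def by simp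
  then have pi: "p j \<cdot> i j = zer C (N j) (M j)" using j unfolding cmp_cyc_cat zer_cyc_cat by simp
  show ?thesis
  proof (rule is_biproduct_if_split[OF O _ _ s ps pi])
    show "i j \<in> Hom C (N j) (L j)" "p j \<in> Hom C (L j) (M j)"
      using Hom_cyc_catD[OF iH j] Hom_cyc_catD[OF pH j] by simp_all
    show "is_mono C (N j) (L j) (i j)"
      using mono_componentwise[OF Ob(1,2) _ j] ses unfolding is_ses_def by blast
    show "\<And>u. u \<in> Hom C (L j) (L j) \<Longrightarrow> p j \<cdot> u = zer C (L j) (M j) \<Longrightarrow>
        \<exists>v\<in>Hom C (L j) (N j). i j \<cdot> v = u"
      using kernel_componentwise[OF Ob(2,3,1) ker pH O(2) j] by blast
  qed
qed

lemma extension_in_CmP: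
  assumes X: "in_CmP C m X" and Y: "in_CmP C m Y" and ext: "(L, i, p) \<in> exts Cm X Y"
  shows "in_CmP C m L"
proof -
  obtain M dM N e L0 dL where XYL: "X = (M, dM)" "Y = (N, e)" "L = (L0, dL)" by (metis surj_pair)
  have ses: "is_ses Cm (N, e) (L0, dL) (M, dM) i p" using ext XYL unfolding exts_def by simp
  have "is_projective C (L0 j)" if j: "j < m" for j
  proof -
    have "is_projective C (N j)" and "is_projective C (M j)"
      using X Y XYL j unfolding in_CmP_def by simp_all
    then show ?thesis using projective_biproduct ses_split_componentwise[OF ses _ j] by blast
  qed
  then show ?thesis using ses_Ob_Hom(2)[OF ses] XYL unfolding in_CmP_def by simp
qed

lemma d0_nonzero_sub:
  assumes N: "(N, e) \<in> Ob Cm" and L: "(L, dL) \<in> Ob Cm" and mono: "is_mono Cm (N, e) (L, dL) i"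
    and D: "d0_nonzero C m (N, e)"
  shows "d0_nonzero C m (L, dL)"
proof (rule ccontr)
  have m0: "0 < m" using m_pos by simp
  define n where "n = nxt 0"
  have n: "n < m" unfolding n_def by (rule nxt_less)
  have iH: "i \<in> Hom Cm (N, e) (L, dL)" using mono unfolding is_mono_def by simp
  have O: "N 0 \<in> Ob C" "L 0 \<in> Ob C" "N n \<in> Ob C" "L n \<in> Ob C"
    using Ob_cyc_catD[OF N m0] Ob_cyc_catD[OF L m0] Ob_cyc_catD[OF N n] Ob_cyc_catD[OF L n] by auto
  have H: "e 0 \<in> Hom C (N 0) (N n)" "i 0 \<in> Hom C (N 0) (L 0)" "i n \<in> Hom C (N n) (L n)"
    using Ob_cyc_catD[OF N m0] Hom_cyc_catD[OF iH m0] Hom_cyc_catD[OF iH n] unfolding n_def by auto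
  assume "\<not> d0_nonzero C m (L, dL)"
  then have "dL 0 = zer C (L 0) (L n)" unfolding d0_nonzero_def n_def by simp
  then have "i n \<cdot> e 0 = i n \<cdot> zer C (N 0) (N n)"
    using Hom_cyc_catD[OF iH m0] zer_comp[OF O(1,2,4) H(2)] comp_zer[OF O(1,3,4) H(3)]
    unfolding n_def by simp
  then have "e 0 = zer C (N 0) (N n)"
    using mono_componentwise[OF N L mono n] O H zer_closed[OF O(1,3)] unfolding is_mono_def by blast
  then show False using D unfolding d0_nonzero_def n_def by simp
qed

lemma d0_nonzero_quotient:
  assumes L: "(L, dL) \<in> Ob Cm" and M: "(M, dM) \<in> Ob Cm" and epi: "is_epi Cm (L, dL) (M, dM) p"
    and D: "d0_nonzero C m (M, dM)"
  shows "d0_nonzero C m (L, dL)"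
proof (rule ccontr)
  have m0: "0 < m" using m_pos by simp
  define n where "n = nxt 0"
  have n: "n < m" unfolding n_def by (rule nxt_less)
  have pH: "p \<in> Hom Cm (L, dL) (M, dM)" using epi unfolding is_epi_def by simp
  have O: "L 0 \<in> Ob C" "M 0 \<in> Ob C" "L n \<in> Ob C" "M n \<in> Ob C"
    using Ob_cyc_catD[OF L m0] Ob_cyc_catD[OF M m0] Ob_cyc_catD[OF L n] Ob_cyc_catD[OF M n] by auto
  have H: "dM 0 \<in> Hom C (M 0) (M n)" "p 0 \<in> Hom C (L 0) (M 0)" "p n \<in> Hom C (L n) (M n)"
    using Ob_cyc_catD[OF M m0] Hom_cyc_catD[OF pH m0] Hom_cyc_catD[OF pH n] unfolding n_def by auto
  assume "\<not> d0_nonzero C m (L, dL)"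
  then have "dL 0 = zer C (L 0) (L n)" unfolding d0_nonzero_def n_def by simp
  then have "dM 0 \<cdot> p 0 = zer C (M 0) (M n) \<cdot> p 0"
    using Hom_cyc_catD[OF pH m0] comp_zer[OF O(1,3,4) H(3)] zer_comp[OF O(1,2,4) H(2)]
    unfolding n_def by simp
  then have "dM 0 = zer C (M 0) (M n)"
    using epi_componentwise[OF L M epi m0] O H zer_closed[OF O(2,4)] unfolding is_epi_def by blast
  then show False using D unfolding d0_nonzero_def n_def by simp
qed

lemma extension_d0_nonzero:
  assumes ext: "(L, i, p) \<in> exts Cm X Y" and D: "d0_nonzero C m X \<or> d0_nonzero C m Y"
  shows "d0_nonzero C m L"
proof -
  obtain M dM N e L0 dL where XYL: "X = (M, dM)" "Y = (N, e)" "L = (L0, dL)" by (metis surj_pair)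
  have ses: "is_ses Cm (N, e) (L0, dL) (M, dM) i p" using ext XYL unfolding exts_def by simp
  then show ?thesis
    using D XYL d0_nonzero_sub[OF ses_Ob_Hom(1,2)[OF ses]]
      d0_nonzero_quotient[OF ses_Ob_Hom(2,3)[OF ses]]
    unfolding is_ses_def by blast
qed

lemma finite_extension_classes:
  assumes fin: "\<forall>X\<in>Ob C. \<forall>Y\<in>Ob C. finite (Hom C X Y)"
    and X: "in_CmP C m X" and Y: "Y \<in> Ob Cm"
  shows "finite {isocls Cm L | L i p. (L, i, p) \<in> exts Cm X Y}"
proof -
  obtain M dM N e where XY: "X = (M, dM)" "Y = (N, e)" by (metis surj_pair)
  define B where "B j = (if j < m then SOME S. is_biproduct C (N j) (M j) S else undefined)" for j
  have O: "N j \<in> Ob C" "M j \<in> Ob C" if "j < m" for j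
    using Ob_cyc_catD[OF Y[unfolded XY] that] X XY Ob_cyc_catD[of M dM j] that
    unfolding in_CmP_def by auto
  have B_biproduct: "is_biproduct C (N j) (M j) (B j)" if "j < m" for j
    unfolding B_def using that someI_ex[OF biproduct_exists[OF O[OF that]]] by simp
  then have B: "B j \<in> Ob C" if "j < m" for j
    using that unfolding is_biproduct_def by blast
  have "{isocls Cm L | L i p. (L, i, p) \<in> exts Cm X Y} \<subseteq>
      {isocls Cm L | L. L \<in> Ob Cm \<and> (\<forall>j<m. isomorphic C (fst L j) (B j))}"
  proof clarify
    fix L0 dL i p assume "((L0, dL), i, p) \<in> exts Cm X Y"
    then have ses: "is_ses Cm (N, e) (L0, dL) (M, dM) i p" using XY unfolding exts_def by simp
    have "isomorphic C (L0 j) (B j)" if j: "j < m" for j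
      using biproducts_isomorphic[OF O[OF j] ses_split_componentwise[OF ses _ j] B_biproduct[OF j]]
        X XY j unfolding in_CmP_def by simp
    then show "\<exists>L. isocls Cm (L0, dL) = isocls Cm L \<and> L \<in> Ob Cm \<and>
        (\<forall>j<m. isomorphic C (fst L j) (B j))"
      using ses_Ob_Hom(2)[OF ses] by auto
  qed
  moreover have "finite {isocls Cm L | L. L \<in> Ob Cm \<and> (\<forall>j<m. isomorphic C (fst L j) (B j))}"
    using finite_classes_with_components[OF fin B] B_def by simp
  ultimately show ?thesis by (rule finite_subset)
qed

lemma hall_mult_d0_nonzero:
  assumes fin: "\<forall>X\<in>Ob C. \<forall>Y\<in>Ob C. finite (Hom C X Y)"
    and f: "f \<in> hall_span Cm (in_CmP C m)"
    and g: "g \<in> hall_span Cm (\<lambda>X. in_CmP C m X \<and> d0_nonzero C m X)"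
  shows "hall_mult Cm f g \<in> hall_span Cm (\<lambda>X. in_CmP C m X \<and> d0_nonzero C m X)"
    and "hall_mult Cm g f \<in> hall_span Cm (\<lambda>X. in_CmP C m X \<and> d0_nonzero C m X)"
  using f g
  by (auto intro!: Cm.hall_mult_in_hall_span intro: in_CmP_isomorphic d0_nonzero_isomorphic
      extension_in_CmP extension_d0_nonzero finite_extension_classes[OF fin])

end

theorem lemma3p3:
  fixes C :: "('o, 'a, 'k::{finite,field}) kcat" and m :: nat
  assumes "finitary_abelian C"
    and "enough_projectives C"
    and "m \<ge> 1"
  shows "two_sided_ideal (hall_mult (cyc_cat C m))
           (hall_span (cyc_cat C m) (in_CmP C m))
           (hall_span (cyc_cat C m) (\<lambda>X. in_CmP C m X \<and> d0_nonzero C m X))"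
proof -
  have abelian: "is_abelian C" and fin: "\<forall>X\<in>Ob C. \<forall>Y\<in>Ob C. finite (Hom C X Y)"
    using assms(1) unfolding finitary_abelian_def by auto
  interpret cyclic_complexes C m
    using abelian assms(3) by unfold_locales
  show ?thesis
    unfolding two_sided_ideal_def
    by (intro conjI ballI allI hall_span_mono zero_in_hall_span hall_span_add hall_span_scale
        hall_mult_d0_nonzero[OF fin]) auto
qed

end
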